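(* Let $\mathcal C$ be a hyper-extensive category with finite products and terminal object $1$, and let $N=\coprod_{n<\omega}1$. Then $N$, with $\mathrm{inj}_0\colon1\to N$ and $[\mathrm{inj}_{n+1}]_{n<\omega}\colon N\to N$, is a natural numbers object (an initial algebra for $1+(-)$), and for every object $Y$ the free cia for the identity functor $\mathrm{Id}$ on $Y$ (equivalently, the terminal coalgebra for $(-)+Y$) is $TY\cong N\times Y+1$.
   Context: Hyper-extensive category: countable coproducts that are universal (pullbacks along arbitrary morphisms exist and preserve them), disjoint (injections monic, pairwise pullbacks initial), and coherent (a countable family of pairwise disjoint coproduct injections has copairing a coproduct injection). For an endofunctor $G$, an algebra $a\colon GA\to A$ is a cia if every $e\colon X\to GX+A$ admits a unique $s$ with $s=[a,\mathrm{id}_A]\cdot(Gs+\mathrm{id}_A)\cdot e$; a free cia on $Y$ is a cia with a morphism from $Y$ through which every morphism from $Y$ into a cia factors uniquely via an algebra morphism. *)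

theory Defs
  imports Main
begin

text \<open>A category whose objects are the elements of type 'o and whose morphisms are
  the elements of type 'm. Composition ccomp g f means g after f.\<close>

record ('o, 'm) cat =
  cdom  :: "'m \<Rightarrow> 'o"
  ccod  :: "'m \<Rightarrow> 'o"
  cid   :: "'o \<Rightarrow> 'm"
  ccomp :: "'m \<Rightarrow> 'm \<Rightarrow> 'm"

definition is_category :: "('o, 'm) cat \<Rightarrow> bool" where
  "is_category C \<longleftrightarrow>
     (\<forall>A. cdom C (cid C A) = A \<and> ccod C (cid C A) = A) \<and>
     (\<forall>f g. ccod C f = cdom C g \<longrightarrow>
        cdom C (ccomp C g f) = cdom C f \<and> ccod C (ccomp C g f) = ccod C g) \<and>
     (\<forall>f. ccomp C f (cid C (cdom C f)) = f \<and> ccomp C (cid C (ccod C f)) f = f) \<and>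
     (\<forall>f g h. ccod C f = cdom C g \<and> ccod C g = cdom C h \<longrightarrow>
        ccomp C h (ccomp C g f) = ccomp C (ccomp C h g) f)"

definition hom :: "('o, 'm) cat \<Rightarrow> 'o \<Rightarrow> 'o \<Rightarrow> 'm set" where
  "hom C A B = {f. cdom C f = A \<and> ccod C f = B}"

definition initial_obj :: "('o, 'm) cat \<Rightarrow> 'o \<Rightarrow> bool" where
  "initial_obj C Z \<longleftrightarrow> (\<forall>A. \<exists>!f. f \<in> hom C Z A)"

definition terminal_obj :: "('o, 'm) cat \<Rightarrow> 'o \<Rightarrow> bool" where
  "terminal_obj C T \<longleftrightarrow> (\<forall>A. \<exists>!f. f \<in> hom C A T)"

definition monic :: "('o, 'm) cat \<Rightarrow> 'm \<Rightarrow> bool" where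
  "monic C f \<longleftrightarrow> (\<forall>g h. ccod C g = cdom C f \<and> ccod C h = cdom C f \<and> cdom C g = cdom C h \<and>
                         ccomp C f g = ccomp C f h \<longrightarrow> g = h)"

text \<open>Coproduct of a family X indexed by a set I of naturals (this covers all countable
  index sets up to bijection), with injections iota.\<close>

definition is_coproduct ::
  "('o, 'm) cat \<Rightarrow> nat set \<Rightarrow> (nat \<Rightarrow> 'o) \<Rightarrow> 'o \<Rightarrow> (nat \<Rightarrow> 'm) \<Rightarrow> bool" where
  "is_coproduct C I X S \<iota> \<longleftrightarrow>
     (\<forall>n\<in>I. \<iota> n \<in> hom C (X n) S) \<and>
     (\<forall>Z f. (\<forall>n\<in>I. f n \<in> hom C (X n) Z) \<longrightarrow>
        (\<exists>!h. h \<in> hom C S Z \<and> (\<forall>n\<in>I. ccomp C h (\<iota> n) = f n)))"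

definition is_bin_coproduct :: "('o, 'm) cat \<Rightarrow> 'o \<Rightarrow> 'o \<Rightarrow> 'o \<Rightarrow> 'm \<Rightarrow> 'm \<Rightarrow> bool" where
  "is_bin_coproduct C A B S i j \<longleftrightarrow>
     i \<in> hom C A S \<and> j \<in> hom C B S \<and>
     (\<forall>Z f g. f \<in> hom C A Z \<and> g \<in> hom C B Z \<longrightarrow>
        (\<exists>!h. h \<in> hom C S Z \<and> ccomp C h i = f \<and> ccomp C h j = g))"

definition is_product :: "('o, 'm) cat \<Rightarrow> 'o \<Rightarrow> 'o \<Rightarrow> 'o \<Rightarrow> 'm \<Rightarrow> 'm \<Rightarrow> bool" where
  "is_product C A B P p1 p2 \<longleftrightarrow>
     p1 \<in> hom C P A \<and> p2 \<in> hom C P B \<and>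
     (\<forall>Z f g. f \<in> hom C Z A \<and> g \<in> hom C Z B \<longrightarrow>
        (\<exists>!h. h \<in> hom C Z P \<and> ccomp C p1 h = f \<and> ccomp C p2 h = g))"

definition has_binary_products :: "('o, 'm) cat \<Rightarrow> bool" where
  "has_binary_products C \<longleftrightarrow> (\<forall>A B. \<exists>P p1 p2. is_product C A B P p1 p2)"

definition is_pullback :: "('o, 'm) cat \<Rightarrow> 'm \<Rightarrow> 'm \<Rightarrow> 'o \<Rightarrow> 'm \<Rightarrow> 'm \<Rightarrow> bool" where
  "is_pullback C f g P p q \<longleftrightarrow>
     ccod C f = ccod C g \<and>
     p \<in> hom C P (cdom C f) \<and> q \<in> hom C P (cdom C g) \<and>
     ccomp C f p = ccomp C g q \<and>
     (\<forall>Q p' q'. p' \<in> hom C Q (cdom C f) \<and> q' \<in> hom C Q (cdom C g) \<and>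
                ccomp C f p' = ccomp C g q' \<longrightarrow>
        (\<exists>!u. u \<in> hom C Q P \<and> ccomp C p u = p' \<and> ccomp C q u = q'))"

definition has_countable_coproducts :: "('o, 'm) cat \<Rightarrow> bool" where
  "has_countable_coproducts C \<longleftrightarrow> (\<forall>(I::nat set) X. \<exists>S \<iota>. is_coproduct C I X S \<iota>)"

definition universal_coproducts :: "('o, 'm) cat \<Rightarrow> bool" where
  "universal_coproducts C \<longleftrightarrow>
     (\<forall>I X S \<iota>. is_coproduct C I X S \<iota> \<longrightarrow>
       (\<forall>Y h. h \<in> hom C Y S \<longrightarrow>
          (\<forall>n\<in>I. \<exists>P p q. is_pullback C (\<iota> n) h P p q) \<and>
          (\<forall>P p q. (\<forall>n\<in>I. is_pullback C (\<iota> n) h (P n) (p n) (q n)) \<longrightarrow>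
                    is_coproduct C I P Y q)))"

definition disjoint_pair :: "('o, 'm) cat \<Rightarrow> 'm \<Rightarrow> 'm \<Rightarrow> bool" where
  "disjoint_pair C f g \<longleftrightarrow> (\<exists>P p q. is_pullback C f g P p q \<and> initial_obj C P)"

definition disjoint_coproducts :: "('o, 'm) cat \<Rightarrow> bool" where
  "disjoint_coproducts C \<longleftrightarrow>
     (\<forall>I X S \<iota>. is_coproduct C I X S \<iota> \<longrightarrow>
        (\<forall>n\<in>I. monic C (\<iota> n)) \<and>
        (\<forall>n\<in>I. \<forall>m\<in>I. n \<noteq> m \<longrightarrow> disjoint_pair C (\<iota> n) (\<iota> m)))"

definition coproduct_injection :: "('o, 'm) cat \<Rightarrow> 'm \<Rightarrow> bool" where
  "coproduct_injection C m \<longleftrightarrow>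
     (\<exists>A' m'. is_bin_coproduct C (cdom C m) A' (ccod C m) m m')"

definition coherent_coproducts :: "('o, 'm) cat \<Rightarrow> bool" where
  "coherent_coproducts C \<longleftrightarrow>
     (\<forall>I A B m. (\<forall>n\<in>I. m n \<in> hom C (A n) B \<and> coproduct_injection C (m n)) \<and>
                (\<forall>n\<in>I. \<forall>k\<in>I. n \<noteq> k \<longrightarrow> disjoint_pair C (m n) (m k)) \<longrightarrow>
        (\<forall>S \<iota> h. is_coproduct C I A S \<iota> \<and> h \<in> hom C S B \<and>
                  (\<forall>n\<in>I. ccomp C h (\<iota> n) = m n) \<longrightarrow> coproduct_injection C h))"

definition hyper_extensive :: "('o, 'm) cat \<Rightarrow> bool" where
  "hyper_extensive C \<longleftrightarrow> is_category C \<and> has_countable_coproducts C \<and>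
     universal_coproducts C \<and> disjoint_coproducts C \<and> coherent_coproducts C"

text \<open>A chosen binary coproduct A+B (exists whenever countable coproducts exist;
  the choice is irrelevant up to isomorphism), copairing and the functor
  action f+g.\<close>

definition bcop :: "('o, 'm) cat \<Rightarrow> 'o \<Rightarrow> 'o \<Rightarrow> 'o \<times> 'm \<times> 'm" where
  "bcop C A B = (SOME (S, i, j). is_bin_coproduct C A B S i j)"

definition cop_obj :: "('o, 'm) cat \<Rightarrow> 'o \<Rightarrow> 'o \<Rightarrow> 'o" where
  "cop_obj C A B = fst (bcop C A B)"

definition cop_inl :: "('o, 'm) cat \<Rightarrow> 'o \<Rightarrow> 'o \<Rightarrow> 'm" where
  "cop_inl C A B = fst (snd (bcop C A B))"

definition cop_inr :: "('o, 'm) cat \<Rightarrow> 'o \<Rightarrow> 'o \<Rightarrow> 'm" where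
  "cop_inr C A B = snd (snd (bcop C A B))"

definition copair :: "('o, 'm) cat \<Rightarrow> 'm \<Rightarrow> 'm \<Rightarrow> 'm" where
  "copair C f g = (THE h. h \<in> hom C (cop_obj C (cdom C f) (cdom C g)) (ccod C f) \<and>
                         ccomp C h (cop_inl C (cdom C f) (cdom C g)) = f \<and>
                         ccomp C h (cop_inr C (cdom C f) (cdom C g)) = g)"

definition cop_map :: "('o, 'm) cat \<Rightarrow> 'm \<Rightarrow> 'm \<Rightarrow> 'm" where
  "cop_map C f g = copair C (ccomp C (cop_inl C (ccod C f) (ccod C g)) f)
                            (ccomp C (cop_inr C (ccod C f) (ccod C g)) g)"

definition initial_alg_one_plus :: "('o, 'm) cat \<Rightarrow> 'o \<Rightarrow> 'o \<Rightarrow> 'm \<Rightarrow> bool" where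
  "initial_alg_one_plus C one N a \<longleftrightarrow>
     a \<in> hom C (cop_obj C one N) N \<and>
     (\<forall>B b. b \<in> hom C (cop_obj C one B) B \<longrightarrow>
        (\<exists>!h. h \<in> hom C N B \<and> ccomp C h a = ccomp C b (cop_map C (cid C one) h)))"

definition is_cia_Id :: "('o, 'm) cat \<Rightarrow> 'o \<Rightarrow> 'm \<Rightarrow> bool" where
  "is_cia_Id C A a \<longleftrightarrow>
     a \<in> hom C A A \<and>
     (\<forall>X e. e \<in> hom C X (cop_obj C X A) \<longrightarrow>
        (\<exists>!s. s \<in> hom C X A \<and>
              s = ccomp C (copair C a (cid C A)) (ccomp C (cop_map C s (cid C A)) e)))"

definition is_free_cia_Id :: "('o, 'm) cat \<Rightarrow> 'o \<Rightarrow> 'o \<Rightarrow> 'm \<Rightarrow> 'm \<Rightarrow> bool" where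
  "is_free_cia_Id C Y T a \<eta> \<longleftrightarrow>
     is_cia_Id C T a \<and> \<eta> \<in> hom C Y T \<and>
     (\<forall>B b f. is_cia_Id C B b \<and> f \<in> hom C Y B \<longrightarrow>
        (\<exists>!h. h \<in> hom C T B \<and> ccomp C h a = ccomp C b h \<and> ccomp C h \<eta> = f))"

definition terminal_coalg_plus :: "('o, 'm) cat \<Rightarrow> 'o \<Rightarrow> 'o \<Rightarrow> 'm \<Rightarrow> bool" where
  "terminal_coalg_plus C Y T c \<longleftrightarrow>
     c \<in> hom C T (cop_obj C T Y) \<and>
     (\<forall>X e. e \<in> hom C X (cop_obj C X Y) \<longrightarrow>
        (\<exists>!h. h \<in> hom C X T \<and> ccomp C c h = ccomp C (cop_map C h (cid C Y)) e))"

end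

(*
  An algebra morphism from N = coprod_n 1 into an algebra b : 1 + B -> B is forced on the n-th
  summand to be the n-fold iterate of b . inr applied to b . inl, so N is the initial algebra.

  By universality N x Y is the copower coprod_n Y, hence T = N x Y + 1 = 1 + Y + Y + ..., the
  summands standing for divergence and for output after n steps; the coalgebra structure moves
  every summand one step down. Given e : X -> X + Y, repeated pullbacks along e cut out the
  states X_n producing output after exactly n steps. These are pairwise disjoint coproduct
  injections, so coherence yields X = X_inf + coprod_n X_n, and e maps X_inf into itself. The
  coalgebra morphism into T sends X_n to the summand of index n + 1 and X_inf to the divergent point,
  and it is unique because a morphism into T that keeps stepping forever pulls back to the empty
  object on every summand but the divergent one. Finally a terminal coalgebra for (-) + Y is a
  free cia: by Lambek's lemma it is an algebra, and a flat equation on X becomes a coalgebra on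
  X + T whose unique morphism into T restricts to the unique solution.
*)

theory Submission
  imports Defs
begin

locale category =
  fixes C :: "('o, 'm) cat"
  assumes is_category: "is_category C"
begin

abbreviation cmp (infixr "\<cdot>" 55) where "g \<cdot> f \<equiv> ccomp C g f"
abbreviation src where "src f \<equiv> cdom C f"
abbreviation trg where "trg f \<equiv> ccod C f"

lemma hom_iff [simp]: "f \<in> hom C A B \<longleftrightarrow> src f = A \<and> trg f = B"
  by (simp add: hom_def)

lemma src_id [simp]: "src (cid C A) = A" and trg_id [simp]: "trg (cid C A) = A"
  using is_category by (auto simp: is_category_def)

lemma src_comp [simp]: "trg f = src g \<Longrightarrow> src (g \<cdot> f) = src f"
  and trg_comp [simp]: "trg f = src g \<Longrightarrow> trg (g \<cdot> f) = trg g"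
  using is_category by (auto simp: is_category_def)

lemma comp_id_right [simp]: "src f = A \<Longrightarrow> f \<cdot> cid C A = f"
  and comp_id_left [simp]: "trg f = A \<Longrightarrow> cid C A \<cdot> f = f"
  using is_category by (auto simp: is_category_def)

lemma comp_assoc [simp]: "trg f = src g \<Longrightarrow> trg g = src h \<Longrightarrow> (h \<cdot> g) \<cdot> f = h \<cdot> (g \<cdot> f)"
  using is_category unfolding is_category_def by metis

lemma comp_reassoc: "g \<cdot> f = k \<Longrightarrow> trg f = src g \<Longrightarrow> trg z = src f \<Longrightarrow> g \<cdot> (f \<cdot> z) = k \<cdot> z"
  by (metis comp_assoc)

lemma coproduct_inj: "is_coproduct C I X S \<iota> \<Longrightarrow> n \<in> I \<Longrightarrow> \<iota> n \<in> hom C (X n) S"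
  unfolding is_coproduct_def by blast

lemma coproduct_cotuple_ex1:
  assumes "is_coproduct C I X S \<iota>" "\<And>n. n \<in> I \<Longrightarrow> f n \<in> hom C (X n) Z"
  shows "\<exists>!h. h \<in> hom C S Z \<and> (\<forall>n\<in>I. h \<cdot> \<iota> n = f n)"
  using assms unfolding is_coproduct_def by blast

lemma coproduct_cotuple_ex:
  assumes "is_coproduct C I X S \<iota>" "\<And>n. n \<in> I \<Longrightarrow> f n \<in> hom C (X n) Z"
  shows "\<exists>h. h \<in> hom C S Z \<and> (\<forall>n\<in>I. h \<cdot> \<iota> n = f n)"
  using coproduct_cotuple_ex1[OF assms] by blast

lemma coproduct_eqI:
  assumes "is_coproduct C I X S \<iota>" "h \<in> hom C S Z" "h' \<in> hom C S Z"
    "\<And>n. n \<in> I \<Longrightarrow> h \<cdot> \<iota> n = h' \<cdot> \<iota> n"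
  shows "h = h'"
proof -
  have "\<exists>!k. k \<in> hom C S Z \<and> (\<forall>n\<in>I. k \<cdot> \<iota> n = h \<cdot> \<iota> n)"
    by (rule coproduct_cotuple_ex1) (use assms coproduct_inj[OF assms(1)] in auto)
  then show ?thesis using assms(2-4) by metis
qed

lemma coproductI:
  assumes "\<And>n. n \<in> I \<Longrightarrow> \<iota> n \<in> hom C (X n) S"
    and "\<And>Z f. (\<And>n. n \<in> I \<Longrightarrow> f n \<in> hom C (X n) Z) \<Longrightarrow>
           \<exists>h. h \<in> hom C S Z \<and> (\<forall>n\<in>I. h \<cdot> \<iota> n = f n)"
    and "\<And>Z h h'. h \<in> hom C S Z \<Longrightarrow> h' \<in> hom C S Z \<Longrightarrow>
           (\<And>n. n \<in> I \<Longrightarrow> h \<cdot> \<iota> n = h' \<cdot> \<iota> n) \<Longrightarrow> h = h'"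
  shows "is_coproduct C I X S \<iota>"
  unfolding is_coproduct_def
proof (intro conjI allI impI ballI)
  show "\<iota> n \<in> hom C (X n) S" if "n \<in> I" for n using assms(1) that .
  fix Z f assume "\<forall>n\<in>I. f n \<in> hom C (X n) Z"
  then obtain h where "h \<in> hom C S Z \<and> (\<forall>n\<in>I. h \<cdot> \<iota> n = f n)" using assms(2) by blast
  then show "\<exists>!h. h \<in> hom C S Z \<and> (\<forall>n\<in>I. h \<cdot> \<iota> n = f n)"
    using assms(3) by (metis (no_types, lifting))
qed

definition cotuple :: "(nat \<Rightarrow> 'm) \<Rightarrow> 'o \<Rightarrow> 'o \<Rightarrow> (nat \<Rightarrow> 'm) \<Rightarrow> 'm" where
  "cotuple \<iota> S Z f = (THE h. h \<in> hom C S Z \<and> (\<forall>n. h \<cdot> \<iota> n = f n))"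

lemma cotuple:
  assumes "is_coproduct C UNIV X S \<iota>" "\<And>n. f n \<in> hom C (X n) Z"
  shows "cotuple \<iota> S Z f \<in> hom C S Z" "cotuple \<iota> S Z f \<cdot> \<iota> n = f n"
  using theI'[OF coproduct_cotuple_ex1[OF assms]] unfolding cotuple_def by auto

lemma bin_coproduct_inl: "is_bin_coproduct C A B S i j \<Longrightarrow> i \<in> hom C A S"
  and bin_coproduct_inr: "is_bin_coproduct C A B S i j \<Longrightarrow> j \<in> hom C B S"
  unfolding is_bin_coproduct_def by blast+

lemma bin_coproduct_copair_ex:
  assumes "is_bin_coproduct C A B S i j" "f \<in> hom C A Z" "g \<in> hom C B Z"
  shows "\<exists>h. h \<in> hom C S Z \<and> h \<cdot> i = f \<and> h \<cdot> j = g"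
  using assms unfolding is_bin_coproduct_def by blast

lemma bin_coproductI:
  assumes "i \<in> hom C A S" "j \<in> hom C B S"
    and "\<And>Z f g. f \<in> hom C A Z \<Longrightarrow> g \<in> hom C B Z \<Longrightarrow> \<exists>h. h \<in> hom C S Z \<and> h \<cdot> i = f \<and> h \<cdot> j = g"
    and "\<And>Z h h'. h \<in> hom C S Z \<Longrightarrow> h' \<in> hom C S Z \<Longrightarrow> h \<cdot> i = h' \<cdot> i \<Longrightarrow> h \<cdot> j = h' \<cdot> j \<Longrightarrow> h = h'"
  shows "is_bin_coproduct C A B S i j"
  unfolding is_bin_coproduct_def
proof (intro conjI allI impI)
  show "i \<in> hom C A S" "j \<in> hom C B S" by (fact assms)+
  fix Z f g assume "f \<in> hom C A Z \<and> g \<in> hom C B Z"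
  then obtain h where "h \<in> hom C S Z \<and> h \<cdot> i = f \<and> h \<cdot> j = g" using assms(3) by blast
  then show "\<exists>!h. h \<in> hom C S Z \<and> h \<cdot> i = f \<and> h \<cdot> j = g"
    using assms(4) by (metis (no_types, lifting))
qed

lemma bin_coproduct_eqI:
  assumes "is_bin_coproduct C A B S i j" "h \<in> hom C S Z" "h' \<in> hom C S Z"
    "h \<cdot> i = h' \<cdot> i" "h \<cdot> j = h' \<cdot> j"
  shows "h = h'"
proof -
  have H: "\<forall>Z f g. f \<in> hom C A Z \<and> g \<in> hom C B Z \<longrightarrow> (\<exists>!h. h \<in> hom C S Z \<and> h \<cdot> i = f \<and> h \<cdot> j = g)"
    using assms(1) unfolding is_bin_coproduct_def by (elim conjE)
  have "\<exists>!k. k \<in> hom C S Z \<and> k \<cdot> i = h \<cdot> i \<and> k \<cdot> j = h \<cdot> j"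
    by (rule H[rule_format]) (use assms(2) bin_coproduct_inl[OF assms(1)] bin_coproduct_inr[OF assms(1)] in auto)
  then show ?thesis using assms(2-5) by metis
qed

lemma bin_coproduct_swap: "is_bin_coproduct C A B S i j \<Longrightarrow> is_bin_coproduct C B A S j i"
  unfolding is_bin_coproduct_def by blast

text \<open>Binary coproducts are the coproducts indexed by \<open>{0, 1}\<close>; this is how the axioms
  of hyper-extensivity, stated for families, reach them.\<close>

lemma bin_coproduct_as_coproduct:
  assumes "is_bin_coproduct C A B S i j"
  shows "is_coproduct C {0, 1} (\<lambda>n. if n = 0 then A else B) S (\<lambda>n. if n = 0 then i else j)"
proof (rule coproductI)
  show "(if n = 0 then i else j) \<in> hom C (if n = 0 then A else B) S" if "n \<in> {0, 1}" for n
    using bin_coproduct_inl[OF assms] bin_coproduct_inr[OF assms] by auto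
  fix Z f assume f: "\<And>n. n \<in> {0::nat, 1} \<Longrightarrow> f n \<in> hom C (if n = 0 then A else B) Z"
  obtain h where "h \<in> hom C S Z \<and> h \<cdot> i = f 0 \<and> h \<cdot> j = f 1"
    using bin_coproduct_copair_ex[OF assms, of "f 0" Z "f 1"] f[of 0] f[of 1] by auto
  then show "\<exists>h. h \<in> hom C S Z \<and> (\<forall>n\<in>{0, 1}. h \<cdot> (if n = 0 then i else j) = f n)"
    by auto
next
  fix Z h h' assume h: "h \<in> hom C S Z" "h' \<in> hom C S Z"
    and eq: "\<And>n. n \<in> {0::nat, 1} \<Longrightarrow> h \<cdot> (if n = 0 then i else j) = h' \<cdot> (if n = 0 then i else j)"
  have "h \<cdot> i = h' \<cdot> i" "h \<cdot> j = h' \<cdot> j" using eq[of 0] eq[of 1] by simp_all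
  then show "h = h'" using bin_coproduct_eqI[OF assms h] by blast
qed

lemma coproduct_2_as_bin_coproduct:
  assumes "is_coproduct C {0, 1} X S \<iota>"
  shows "is_bin_coproduct C (X 0) (X 1) S (\<iota> 0) (\<iota> 1)"
proof (rule bin_coproductI)
  show "\<iota> 0 \<in> hom C (X 0) S" "\<iota> 1 \<in> hom C (X 1) S" using coproduct_inj[OF assms] by auto
  fix Z f g assume "f \<in> hom C (X 0) Z" "g \<in> hom C (X 1) Z"
  then have "\<exists>h. h \<in> hom C S Z \<and> (\<forall>n\<in>{0, 1}. h \<cdot> \<iota> n = (if n = 0 then f else g))"
    by (intro coproduct_cotuple_ex[OF assms]) auto
  then show "\<exists>h. h \<in> hom C S Z \<and> h \<cdot> \<iota> 0 = f \<and> h \<cdot> \<iota> 1 = g"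
    by (metis insertCI zero_neq_one)
next
  fix Z h h' assume "h \<in> hom C S Z" "h' \<in> hom C S Z" "h \<cdot> \<iota> 0 = h' \<cdot> \<iota> 0" "h \<cdot> \<iota> 1 = h' \<cdot> \<iota> 1"
  then show "h = h'" using coproduct_eqI[OF assms, of h Z h'] by blast
qed

lemma coproduct_case_nat:
  assumes b: "is_bin_coproduct C A B S i j" and c: "is_coproduct C UNIV X A \<iota>"
  shows "is_coproduct C UNIV (case_nat B X) S (case_nat j (\<lambda>m. i \<cdot> \<iota> m))"
proof -
  have [simp]: "src i = A" "trg i = S" "src j = B" "trg j = S"
    using bin_coproduct_inl[OF b] bin_coproduct_inr[OF b] by auto
  have [simp]: "src (\<iota> m) = X m" "trg (\<iota> m) = A" for m
    using coproduct_inj[OF c] by auto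
  show ?thesis
  proof (rule coproductI)
    show "case_nat j (\<lambda>m. i \<cdot> \<iota> m) n \<in> hom C (case_nat B X n) S" for n
      by (simp split: nat.split)
  next
    fix Z f assume f: "\<And>n. n \<in> UNIV \<Longrightarrow> f n \<in> hom C (case_nat B X n) Z"
    obtain g where g: "g \<in> hom C A Z" "\<forall>m\<in>UNIV. g \<cdot> \<iota> m = f (Suc m)"
      using coproduct_cotuple_ex[OF c, of "\<lambda>m. f (Suc m)" Z] f by auto
    obtain h where h: "h \<in> hom C S Z" "h \<cdot> i = g" "h \<cdot> j = f 0"
      using bin_coproduct_copair_ex[OF b g(1), of "f 0"] f[of 0] by auto
    show "\<exists>h. h \<in> hom C S Z \<and> (\<forall>n\<in>UNIV. h \<cdot> case_nat j (\<lambda>m. i \<cdot> \<iota> m) n = f n)"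
      using h g by (intro exI[of _ h]) (auto split: nat.split simp flip: comp_assoc)
  next
    fix Z h h' assume h: "h \<in> hom C S Z" "h' \<in> hom C S Z"
      and e: "\<And>n. n \<in> UNIV \<Longrightarrow> h \<cdot> case_nat j (\<lambda>m. i \<cdot> \<iota> m) n = h' \<cdot> case_nat j (\<lambda>m. i \<cdot> \<iota> m) n"
    have "h \<cdot> i = h' \<cdot> i"
      by (rule coproduct_eqI[OF c]) (use h e[of "Suc _"] in auto)
    moreover have "h \<cdot> j = h' \<cdot> j" using e[of 0] by simp
    ultimately show "h = h'" using bin_coproduct_eqI[OF b h] by blast
  qed
qed

lemma initial_arrow_ex: "initial_obj C Z \<Longrightarrow> \<exists>f. f \<in> hom C Z A"
  unfolding initial_obj_def by blast

lemma initial_arrow_eq: "initial_obj C Z \<Longrightarrow> f \<in> hom C Z A \<Longrightarrow> g \<in> hom C Z A \<Longrightarrow> f = g"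
  unfolding initial_obj_def by blast

lemma coproduct_empty_initial:
  assumes "is_coproduct C {} X S \<iota>"
  shows "initial_obj C S"
  unfolding initial_obj_def
proof
  fix A
  obtain h where "h \<in> hom C S A" using coproduct_cotuple_ex[OF assms, of "\<lambda>_. undefined" A] by auto
  then show "\<exists>!f. f \<in> hom C S A" using coproduct_eqI[OF assms] by blast
qed

lemma initial_coproduct_empty:
  assumes "initial_obj C S"
  shows "is_coproduct C {} X S \<iota>"
  by (rule coproductI) (use initial_arrow_ex[OF assms] initial_arrow_eq[OF assms] in auto)

lemma coproduct_inj_iso_if_others_initial:
  assumes "is_coproduct C I X S \<iota>" "k \<in> I" "\<And>n. n \<in> I \<Longrightarrow> n \<noteq> k \<Longrightarrow> initial_obj C (X n)"
  obtains \<phi> where "\<phi> \<in> hom C S (X k)" "\<phi> \<cdot> \<iota> k = cid C (X k)" "\<iota> k \<cdot> \<phi> = cid C S"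
proof -
  define f where "f n = (if n = k then cid C (X k) else (SOME g. g \<in> hom C (X n) (X k)))" for n
  have f: "f n \<in> hom C (X n) (X k)" if "n \<in> I" for n
  proof (cases "n = k")
    case False
    have "(SOME g. g \<in> hom C (X n) (X k)) \<in> hom C (X n) (X k)"
      by (rule someI_ex[OF initial_arrow_ex[OF assms(3)[OF that False]]])
    with False show ?thesis by (simp add: f_def del: hom_iff)
  qed (simp add: f_def)
  obtain \<phi> where \<phi>: "\<phi> \<in> hom C S (X k)" "\<forall>n\<in>I. \<phi> \<cdot> \<iota> n = f n"
    using coproduct_cotuple_ex[OF assms(1) f] by blast
  have \<iota>k: "\<iota> k \<in> hom C (X k) S" using coproduct_inj[OF assms(1,2)] .
  have "\<iota> k \<cdot> \<phi> = cid C S"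
  proof (rule coproduct_eqI[OF assms(1)])
    show "\<iota> k \<cdot> \<phi> \<in> hom C S S" "cid C S \<in> hom C S S" using \<iota>k \<phi> by auto
    fix n assume n: "n \<in> I"
    show "(\<iota> k \<cdot> \<phi>) \<cdot> \<iota> n = cid C S \<cdot> \<iota> n"
    proof (cases "n = k")
      case True then show ?thesis using \<phi> n \<iota>k by (simp add: f_def)
    next
      case False
      show ?thesis
        by (rule initial_arrow_eq[OF assms(3)[OF n False]]) (use \<iota>k \<phi> coproduct_inj[OF assms(1) n] in auto)
    qed
  qed
  moreover have "\<phi> \<cdot> \<iota> k = cid C (X k)" using \<phi> assms(2) by (simp add: f_def)
  ultimately show ?thesis using that \<phi>(1) by blast
qed

lemma pullbackD:
  assumes "is_pullback C f g P p q"
  shows "trg f = trg g" "p \<in> hom C P (src f)" "q \<in> hom C P (src g)" "f \<cdot> p = g \<cdot> q"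
  using assms unfolding is_pullback_def by blast+

lemma pullback_lift:
  assumes "is_pullback C f g P p q" "p' \<in> hom C Q (src f)" "q' \<in> hom C Q (src g)" "f \<cdot> p' = g \<cdot> q'"
  shows "\<exists>u. u \<in> hom C Q P \<and> p \<cdot> u = p' \<and> q \<cdot> u = q'"
proof -
  have H: "\<forall>Q p' q'. p' \<in> hom C Q (src f) \<and> q' \<in> hom C Q (src g) \<and> f \<cdot> p' = g \<cdot> q' \<longrightarrow>
        (\<exists>!u. u \<in> hom C Q P \<and> p \<cdot> u = p' \<and> q \<cdot> u = q')"
    using assms(1) unfolding is_pullback_def by (elim conjE)
  have "\<exists>!u. u \<in> hom C Q P \<and> p \<cdot> u = p' \<and> q \<cdot> u = q'"
    by (rule H[rule_format]) (use assms in blast)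
  then show ?thesis by blast
qed

lemma pullbackI:
  assumes "trg f = trg g" "p \<in> hom C P (src f)" "q \<in> hom C P (src g)" "f \<cdot> p = g \<cdot> q"
    and "\<And>Q p' q'. p' \<in> hom C Q (src f) \<Longrightarrow> q' \<in> hom C Q (src g) \<Longrightarrow> f \<cdot> p' = g \<cdot> q' \<Longrightarrow>
           \<exists>u. u \<in> hom C Q P \<and> p \<cdot> u = p' \<and> q \<cdot> u = q'"
    and "\<And>Q u u'. u \<in> hom C Q P \<Longrightarrow> u' \<in> hom C Q P \<Longrightarrow> p \<cdot> u = p \<cdot> u' \<Longrightarrow> q \<cdot> u = q \<cdot> u' \<Longrightarrow> u = u'"
  shows "is_pullback C f g P p q"
  unfolding is_pullback_def
proof (intro conjI allI impI)
  show "trg f = trg g" "p \<in> hom C P (src f)" "q \<in> hom C P (src g)" "f \<cdot> p = g \<cdot> q" by (fact assms)+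
  fix Q p' q' assume "p' \<in> hom C Q (src f) \<and> q' \<in> hom C Q (src g) \<and> f \<cdot> p' = g \<cdot> q'"
  then obtain u where "u \<in> hom C Q P \<and> p \<cdot> u = p' \<and> q \<cdot> u = q'" using assms(5) by blast
  then show "\<exists>!u. u \<in> hom C Q P \<and> p \<cdot> u = p' \<and> q \<cdot> u = q'"
    using assms(6) by (metis (no_types, lifting))
qed

definition pullback_of :: "'m \<Rightarrow> 'm \<Rightarrow> 'o \<times> 'm \<times> 'm" where
  "pullback_of f g = (SOME (P, p, q). is_pullback C f g P p q)"

lemma pullback_of:
  assumes "is_pullback C f g P p q"
  shows "is_pullback C f g (fst (pullback_of f g)) (fst (snd (pullback_of f g))) (snd (snd (pullback_of f g)))"
proof -
  have "case pullback_of f g of (P, p, q) \<Rightarrow> is_pullback C f g P p q"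
    unfolding pullback_of_def by (rule someI_ex) (use assms in auto)
  then show ?thesis by (simp split: prod.splits)
qed

lemma product_pair_ex1:
  assumes "is_product C A B P p1 p2" "f \<in> hom C Z A" "g \<in> hom C Z B"
  shows "\<exists>!h. h \<in> hom C Z P \<and> p1 \<cdot> h = f \<and> p2 \<cdot> h = g"
proof -
  have "\<forall>Z f g. f \<in> hom C Z A \<and> g \<in> hom C Z B \<longrightarrow> (\<exists>!h. h \<in> hom C Z P \<and> p1 \<cdot> h = f \<and> p2 \<cdot> h = g)"
    using assms(1) unfolding is_product_def by (elim conjE)
  then show ?thesis using assms(2,3) by blast
qed

lemma monicD:
  "monic C f \<Longrightarrow> f \<cdot> g = f \<cdot> h \<Longrightarrow> trg g = src f \<Longrightarrow> trg h = src f \<Longrightarrow> src g = src h \<Longrightarrow> g = h"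
  unfolding monic_def by blast

lemma coproduct_injectionE:
  "coproduct_injection C m \<Longrightarrow> (\<And>A' m'. is_bin_coproduct C (src m) A' (trg m) m m' \<Longrightarrow> P) \<Longrightarrow> P"
  unfolding coproduct_injection_def by blast

lemma bin_coproduct_coproduct_injection:
  "is_bin_coproduct C A B S i j \<Longrightarrow> coproduct_injection C i"
  "is_bin_coproduct C A B S i j \<Longrightarrow> coproduct_injection C j"
  unfolding coproduct_injection_def
  using bin_coproduct_inl bin_coproduct_inr bin_coproduct_swap by fastforce+

end

locale countable_coproducts = category +
  assumes has_countable_coproducts: "has_countable_coproducts C"
begin

abbreviation cop (infixl "\<oplus>" 65) where "A \<oplus> B \<equiv> cop_obj C A B"
abbreviation inl where "inl A B \<equiv> cop_inl C A B"
abbreviation inr where "inr A B \<equiv> cop_inr C A B"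

lemma bin_coproduct_exists: "\<exists>S i j. is_bin_coproduct C A B S i j"
proof -
  obtain S \<iota> where "is_coproduct C {0, 1} (\<lambda>n. if n = 0 then A else B) S \<iota>"
    using has_countable_coproducts unfolding has_countable_coproducts_def by blast
  from coproduct_2_as_bin_coproduct[OF this] show ?thesis by auto
qed

lemma chosen_bin_coproduct: "is_bin_coproduct C A B (A \<oplus> B) (inl A B) (inr A B)"
proof -
  have "case bcop C A B of (S, i, j) \<Rightarrow> is_bin_coproduct C A B S i j"
    unfolding bcop_def by (rule someI_ex) (use bin_coproduct_exists in auto)
  then show ?thesis unfolding cop_obj_def cop_inl_def cop_inr_def by (auto split: prod.splits)
qed

lemma src_inl [simp]: "src (inl A B) = A" and trg_inl [simp]: "trg (inl A B) = A \<oplus> B"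
  and src_inr [simp]: "src (inr A B) = B" and trg_inr [simp]: "trg (inr A B) = A \<oplus> B"
  using chosen_bin_coproduct[of A B] by (auto simp: is_bin_coproduct_def)

lemma cop_eqI:
  assumes "h \<in> hom C (A \<oplus> B) Z" "h' \<in> hom C (A \<oplus> B) Z"
    "h \<cdot> inl A B = h' \<cdot> inl A B" "h \<cdot> inr A B = h' \<cdot> inr A B"
  shows "h = h'"
  using bin_coproduct_eqI[OF chosen_bin_coproduct assms] .

lemma copair:
  assumes "f \<in> hom C A Z" "g \<in> hom C B Z"
  shows "copair C f g \<in> hom C (A \<oplus> B) Z" "copair C f g \<cdot> inl A B = f" "copair C f g \<cdot> inr A B = g"
proof -
  have "\<exists>!h. h \<in> hom C (A \<oplus> B) Z \<and> h \<cdot> inl A B = f \<and> h \<cdot> inr A B = g"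
    using chosen_bin_coproduct[of A B] assms unfolding is_bin_coproduct_def by blast
  from theI'[OF this] assms show "copair C f g \<in> hom C (A \<oplus> B) Z" "copair C f g \<cdot> inl A B = f"
    "copair C f g \<cdot> inr A B = g" unfolding copair_def by auto
qed

lemma src_copair [simp]: "trg f = trg g \<Longrightarrow> src (copair C f g) = src f \<oplus> src g"
  and trg_copair [simp]: "trg f = trg g \<Longrightarrow> trg (copair C f g) = trg f"
  using copair(1)[of f "src f" "trg f" g "src g"] by simp_all

lemma copair_inl [simp]: "trg f = trg g \<Longrightarrow> A = src f \<Longrightarrow> B = src g \<Longrightarrow> copair C f g \<cdot> inl A B = f"
  and copair_inr [simp]: "trg f = trg g \<Longrightarrow> A = src f \<Longrightarrow> B = src g \<Longrightarrow> copair C f g \<cdot> inr A B = g"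
  using copair(2,3)[of f "src f" "trg f" g "src g"] by simp_all

lemma copair_inl_comp [simp]:
  "trg f = trg g \<Longrightarrow> A = src f \<Longrightarrow> B = src g \<Longrightarrow> trg z = A \<Longrightarrow> copair C f g \<cdot> (inl A B \<cdot> z) = f \<cdot> z"
  and copair_inr_comp [simp]:
  "trg f = trg g \<Longrightarrow> A = src f \<Longrightarrow> B = src g \<Longrightarrow> trg z = B \<Longrightarrow> copair C f g \<cdot> (inr A B \<cdot> z) = g \<cdot> z"
  by (rule comp_reassoc, simp_all)+

lemma src_cop_map [simp]: "src (cop_map C f g) = src f \<oplus> src g"
  and trg_cop_map [simp]: "trg (cop_map C f g) = trg f \<oplus> trg g"
  unfolding cop_map_def by simp_all

lemma cop_map_inl [simp]: "A = src f \<Longrightarrow> B = src g \<Longrightarrow> cop_map C f g \<cdot> inl A B = inl (trg f) (trg g) \<cdot> f"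
  and cop_map_inr [simp]: "A = src f \<Longrightarrow> B = src g \<Longrightarrow> cop_map C f g \<cdot> inr A B = inr (trg f) (trg g) \<cdot> g"
  unfolding cop_map_def by simp_all

lemma cop_map_inl_comp [simp]: "A = src f \<Longrightarrow> B = src g \<Longrightarrow> trg z = A \<Longrightarrow>
    cop_map C f g \<cdot> (inl A B \<cdot> z) = inl (trg f) (trg g) \<cdot> (f \<cdot> z)"
  and cop_map_inr_comp [simp]: "A = src f \<Longrightarrow> B = src g \<Longrightarrow> trg z = B \<Longrightarrow>
    cop_map C f g \<cdot> (inr A B \<cdot> z) = inr (trg f) (trg g) \<cdot> (g \<cdot> z)"
   apply (subst comp_reassoc[of _ _ "inl (trg f) (trg g) \<cdot> f"]; simp)
  apply (subst comp_reassoc[of _ _ "inr (trg f) (trg g) \<cdot> g"]; simp)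
  done

lemma cop_map_id [simp]: "cop_map C (cid C A) (cid C B) = cid C (A \<oplus> B)"
  by (rule cop_eqI[where A = A and B = B]) simp_all

lemma cop_map_comp [simp]: "trg f' = src f \<Longrightarrow> trg g' = src g \<Longrightarrow>
    cop_map C f g \<cdot> cop_map C f' g' = cop_map C (f \<cdot> f') (g \<cdot> g')"
  by (rule cop_eqI[where A = "src f'" and B = "src g'"]) simp_all

lemma cop_map_comp_comp [simp]: "trg f' = src f \<Longrightarrow> trg g' = src g \<Longrightarrow> trg z = src f' \<oplus> src g' \<Longrightarrow>
    cop_map C f g \<cdot> (cop_map C f' g' \<cdot> z) = cop_map C (f \<cdot> f') (g \<cdot> g') \<cdot> z"
  by (subst comp_reassoc[OF cop_map_comp]) simp_all

lemma bin_coproduct_assoc: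
  assumes b1: "is_bin_coproduct C A A' B m1 m1'" and b2: "is_bin_coproduct C B B' D m2 m2'"
  shows "is_bin_coproduct C A (A' \<oplus> B') D (m2 \<cdot> m1) (copair C (m2 \<cdot> m1') m2')"
proof -
  have [simp]: "src m1 = A" "trg m1 = B" "src m1' = A'" "trg m1' = B"
    "src m2 = B" "trg m2 = D" "src m2' = B'" "trg m2' = D"
    using bin_coproduct_inl[OF b1] bin_coproduct_inr[OF b1]
      bin_coproduct_inl[OF b2] bin_coproduct_inr[OF b2] by auto
  define m' where "m' = copair C (m2 \<cdot> m1') m2'"
  have [simp]: "src m' = A' \<oplus> B'" "trg m' = D" "m' \<cdot> inl A' B' = m2 \<cdot> m1'" "m' \<cdot> inr A' B' = m2'"
    unfolding m'_def by simp_all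
  have "is_bin_coproduct C A (A' \<oplus> B') D (m2 \<cdot> m1) m'"
  proof (rule bin_coproductI)
    fix Z f g assume f: "f \<in> hom C A Z" and g: "g \<in> hom C (A' \<oplus> B') Z"
    obtain g1 where g1: "g1 \<in> hom C B Z" "g1 \<cdot> m1 = f" "g1 \<cdot> m1' = g \<cdot> inl A' B'"
      using bin_coproduct_copair_ex[OF b1 f, of "g \<cdot> inl A' B'"] g by auto
    obtain h where h: "h \<in> hom C D Z" "h \<cdot> m2 = g1" "h \<cdot> m2' = g \<cdot> inr A' B'"
      using bin_coproduct_copair_ex[OF b2 g1(1), of "g \<cdot> inr A' B'"] g by auto
    have "h \<cdot> m' = g"
    proof (rule cop_eqI[where A = A' and B = B'])
      have "h \<cdot> (m' \<cdot> inl A' B') = g1 \<cdot> m1'" using h by (simp add: comp_reassoc[OF h(2)])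
      then show "(h \<cdot> m') \<cdot> inl A' B' = g \<cdot> inl A' B'" using h g1 by simp
    qed (use h g in simp_all)
    moreover have "h \<cdot> (m2 \<cdot> m1) = f" using h g1 by (simp flip: comp_assoc)
    ultimately show "\<exists>h. h \<in> hom C D Z \<and> h \<cdot> (m2 \<cdot> m1) = f \<and> h \<cdot> m' = g" using h by blast
  next
    fix Z h h' assume h: "h \<in> hom C D Z" "h' \<in> hom C D Z"
      and eq1: "h \<cdot> (m2 \<cdot> m1) = h' \<cdot> (m2 \<cdot> m1)" and eq2: "h \<cdot> m' = h' \<cdot> m'"
    have "(h \<cdot> m') \<cdot> inl A' B' = (h' \<cdot> m') \<cdot> inl A' B'" "(h \<cdot> m') \<cdot> inr A' B' = (h' \<cdot> m') \<cdot> inr A' B'"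
      using eq2 by simp_all
    then have "(h \<cdot> m2) \<cdot> m1' = (h' \<cdot> m2) \<cdot> m1'" and "h \<cdot> m2' = h' \<cdot> m2'" using h by simp_all
    moreover have "(h \<cdot> m2) \<cdot> m1 = (h' \<cdot> m2) \<cdot> m1" using h eq1 by simp
    ultimately have "h \<cdot> m2 = h' \<cdot> m2" and "h \<cdot> m2' = h' \<cdot> m2'"
      using bin_coproduct_eqI[OF b1, of "h \<cdot> m2" Z "h' \<cdot> m2"] h by auto
    then show "h = h'" using bin_coproduct_eqI[OF b2 h] by blast
  qed simp_all
  then show ?thesis unfolding m'_def .
qed

lemma coproduct_injection_comp:
  assumes "coproduct_injection C m1" "coproduct_injection C m2" "trg m1 = src m2"
  shows "coproduct_injection C (m2 \<cdot> m1)"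
proof -
  obtain A' m1' where "is_bin_coproduct C (src m1) A' (trg m1) m1 m1'"
    using assms(1) by (rule coproduct_injectionE)
  moreover obtain B' m2' where "is_bin_coproduct C (src m2) B' (trg m2) m2 m2'"
    using assms(2) by (rule coproduct_injectionE)
  ultimately show ?thesis
    using bin_coproduct_assoc assms(3) unfolding coproduct_injection_def by fastforce
qed

section \<open>The natural numbers object\<close>

lemma one_plus_algebra_morphism_iff:
  assumes N: "is_coproduct C UNIV (\<lambda>_. one) N \<iota>" and s: "s \<in> hom C N N" "\<forall>n. s \<cdot> \<iota> n = \<iota> (Suc n)"
    and b: "b \<in> hom C (one \<oplus> B) B" and k: "k \<in> hom C N B"
  shows "k \<cdot> copair C (\<iota> 0) s = b \<cdot> cop_map C (cid C one) k \<longleftrightarrow>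
    (\<forall>n. k \<cdot> \<iota> n = rec_nat (b \<cdot> inl one B) (\<lambda>_ x. b \<cdot> (inr one B \<cdot> x)) n)"
    (is "?alg \<longleftrightarrow> (\<forall>n. k \<cdot> \<iota> n = ?\<beta> n)")
proof -
  have [simp]: "src (\<iota> n) = one" "trg (\<iota> n) = N" for n using coproduct_inj[OF N] by auto
  have [simp]: "src s = N" "trg s = N" "src b = one \<oplus> B" "trg b = B" "src k = N" "trg k = B"
    using s b k by auto
  have [simp]: "s \<cdot> \<iota> n = \<iota> (Suc n)" for n using s by blast
  have [simp]: "src (?\<beta> n) = one \<and> trg (?\<beta> n) = B" for n by (induction n) simp_all
  have "?alg \<longleftrightarrow> k \<cdot> \<iota> 0 = b \<cdot> inl one B \<and> k \<cdot> s = b \<cdot> (inr one B \<cdot> k)"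
  proof
    assume alg: ?alg
    have "k \<cdot> \<iota> 0 = (k \<cdot> copair C (\<iota> 0) s) \<cdot> inl one N" by simp
    also have "\<dots> = (b \<cdot> cop_map C (cid C one) k) \<cdot> inl one N" by (simp only: alg)
    finally have "k \<cdot> \<iota> 0 = b \<cdot> inl one B" by simp
    moreover have "k \<cdot> s = (k \<cdot> copair C (\<iota> 0) s) \<cdot> inr one N" by simp
    then have "k \<cdot> s = (b \<cdot> cop_map C (cid C one) k) \<cdot> inr one N" by (simp only: alg)
    then have "k \<cdot> s = b \<cdot> (inr one B \<cdot> k)" by simp
    ultimately show "k \<cdot> \<iota> 0 = b \<cdot> inl one B \<and> k \<cdot> s = b \<cdot> (inr one B \<cdot> k)" by simp
  next
    assume step: "k \<cdot> \<iota> 0 = b \<cdot> inl one B \<and> k \<cdot> s = b \<cdot> (inr one B \<cdot> k)"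
    show ?alg
    proof (rule cop_eqI[where A = one and B = N])
      have "(k \<cdot> copair C (\<iota> 0) s) \<cdot> inl one N = k \<cdot> \<iota> 0" by simp
      then show "(k \<cdot> copair C (\<iota> 0) s) \<cdot> inl one N = (b \<cdot> cop_map C (cid C one) k) \<cdot> inl one N"
        using step by simp
      have "(k \<cdot> copair C (\<iota> 0) s) \<cdot> inr one N = k \<cdot> s" by simp
      then show "(k \<cdot> copair C (\<iota> 0) s) \<cdot> inr one N = (b \<cdot> cop_map C (cid C one) k) \<cdot> inr one N"
        using step by simp
    qed simp_all
  qed
  also have "\<dots> \<longleftrightarrow> (\<forall>n. k \<cdot> \<iota> n = ?\<beta> n)"
  proof (intro iffI allI)
    fix n assume step: "k \<cdot> \<iota> 0 = b \<cdot> inl one B \<and> k \<cdot> s = b \<cdot> (inr one B \<cdot> k)"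
    show "k \<cdot> \<iota> n = ?\<beta> n"
    proof (induction n)
      case (Suc n)
      have "k \<cdot> \<iota> (Suc n) = (k \<cdot> s) \<cdot> \<iota> n" by simp
      also have "\<dots> = b \<cdot> (inr one B \<cdot> (k \<cdot> \<iota> n))" using step by simp
      finally show ?case using Suc by simp
    qed (use step in simp)
  next
    assume \<beta>: "\<forall>n. k \<cdot> \<iota> n = ?\<beta> n"
    have "k \<cdot> s = b \<cdot> (inr one B \<cdot> k)"
      by (rule coproduct_eqI[OF N]) (use \<beta> in simp_all)
    then show "k \<cdot> \<iota> 0 = b \<cdot> inl one B \<and> k \<cdot> s = b \<cdot> (inr one B \<cdot> k)" using \<beta> by simp
  qed
  finally show ?thesis .
qed

theorem natural_numbers_object:
  assumes N: "is_coproduct C UNIV (\<lambda>_. one) N \<iota>" and s: "s \<in> hom C N N" "\<forall>n. s \<cdot> \<iota> n = \<iota> (Suc n)"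
  shows "initial_alg_one_plus C one N (copair C (\<iota> 0) s)"
  unfolding initial_alg_one_plus_def
proof (intro conjI allI impI)
  show "copair C (\<iota> 0) s \<in> hom C (one \<oplus> N) N" using coproduct_inj[OF N] s by simp
  fix B b assume b: "b \<in> hom C (one \<oplus> B) B"
  let ?\<beta> = "rec_nat (b \<cdot> inl one B) (\<lambda>_ x. b \<cdot> (inr one B \<cdot> x))"
  have "?\<beta> n \<in> hom C one B" for n using b by (induction n) simp_all
  then have "\<exists>!k. k \<in> hom C N B \<and> (\<forall>n. k \<cdot> \<iota> n = ?\<beta> n)"
    using coproduct_cotuple_ex1[OF N] by simp
  then show "\<exists>!k. k \<in> hom C N B \<and> k \<cdot> copair C (\<iota> 0) s = b \<cdot> cop_map C (cid C one) k"
    using one_plus_algebra_morphism_iff[OF N s b] by (metis (no_types, lifting))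
qed

end

section \<open>Terminal coalgebras for \<open>(-) + Y\<close> are free cias\<close>

locale terminal_plus_coalgebra = countable_coproducts +
  fixes Y T c
  assumes terminal: "terminal_coalg_plus C Y T c"
begin

lemma structure_hom [simp]: "src c = T" "trg c = T \<oplus> Y"
  using terminal unfolding terminal_coalg_plus_def by auto

lemma coalgebra_morphism_ex1:
  assumes "e \<in> hom C X (X \<oplus> Y)"
  shows "\<exists>!h. h \<in> hom C X T \<and> c \<cdot> h = cop_map C h (cid C Y) \<cdot> e"
  using terminal assms unfolding terminal_coalg_plus_def by blast

lemma coalgebra_morphism_eq:
  assumes "e \<in> hom C X (X \<oplus> Y)"
    and "h \<in> hom C X T" "c \<cdot> h = cop_map C h (cid C Y) \<cdot> e"
    and "h' \<in> hom C X T" "c \<cdot> h' = cop_map C h' (cid C Y) \<cdot> e"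
  shows "h = h'"
  using coalgebra_morphism_ex1[OF assms(1)] assms(2-5) by blast

lemma coalgebra_endomorphism_id:
  assumes "k \<in> hom C T T" "c \<cdot> k = cop_map C k (cid C Y) \<cdot> c"
  shows "k = cid C T"
  using coalgebra_morphism_eq[of c T k "cid C T"] assms by simp

lemma lambek: "\<exists>d. d \<in> hom C (T \<oplus> Y) T \<and> c \<cdot> d = cid C (T \<oplus> Y) \<and> d \<cdot> c = cid C T"
proof -
  have "cop_map C c (cid C Y) \<in> hom C (T \<oplus> Y) ((T \<oplus> Y) \<oplus> Y)" by simp
  then obtain d where d: "d \<in> hom C (T \<oplus> Y) T"
    and dc: "c \<cdot> d = cop_map C d (cid C Y) \<cdot> cop_map C c (cid C Y)"
    using coalgebra_morphism_ex1 by blast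
  have [simp]: "src d = T \<oplus> Y" "trg d = T" using d by auto
  have cd: "c \<cdot> d = cop_map C (d \<cdot> c) (cid C Y)" using dc by simp
  have "d \<cdot> c = cid C T"
  proof (rule coalgebra_endomorphism_id)
    show "c \<cdot> (d \<cdot> c) = cop_map C (d \<cdot> c) (cid C Y) \<cdot> c" using comp_reassoc[OF cd, of c] by simp
  qed simp
  moreover from cd this have "c \<cdot> d = cid C (T \<oplus> Y)" by simp
  ultimately show ?thesis using d by blast
qed

definition c_inv where
  "c_inv = (SOME d. d \<in> hom C (T \<oplus> Y) T \<and> c \<cdot> d = cid C (T \<oplus> Y) \<and> d \<cdot> c = cid C T)"

lemma c_inv: "c_inv \<in> hom C (T \<oplus> Y) T" "c \<cdot> c_inv = cid C (T \<oplus> Y)" "c_inv \<cdot> c = cid C T"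
  using someI_ex[OF lambek] unfolding c_inv_def by blast+

lemma src_c_inv [simp]: "src c_inv = T \<oplus> Y" and trg_c_inv [simp]: "trg c_inv = T"
  using c_inv(1) by auto

lemma c_c_inv [simp]: "trg z = T \<oplus> Y \<Longrightarrow> c \<cdot> (c_inv \<cdot> z) = z"
  and c_inv_c [simp]: "trg z = T \<Longrightarrow> c_inv \<cdot> (c \<cdot> z) = z"
  using comp_reassoc[OF c_inv(2)] comp_reassoc[OF c_inv(3)] by simp_all

definition alg where "alg = c_inv \<cdot> inl T Y"
definition eta where "eta = c_inv \<cdot> inr T Y"

lemma src_alg [simp]: "src alg = T" and trg_alg [simp]: "trg alg = T"
  and src_eta [simp]: "src eta = Y" and trg_eta [simp]: "trg eta = T"
  unfolding alg_def eta_def by simp_all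

lemma c_alg [simp]: "trg z = T \<Longrightarrow> c \<cdot> (alg \<cdot> z) = inl T Y \<cdot> z"
  and c_eta [simp]: "trg z = Y \<Longrightarrow> c \<cdot> (eta \<cdot> z) = inr T Y \<cdot> z"
  unfolding alg_def eta_def by simp_all

text \<open>A flat equation \<open>e : X \<rightarrow> X + T\<close> becomes the coalgebra \<open>coalg_on_sum X \<circ> [e, inr]\<close>
  on \<open>X + T\<close>: on \<open>X\<close> it follows \<open>e\<close> and then either stays in \<open>X\<close> or continues as \<open>c\<close>
  on \<open>T\<close>. Its coalgebra morphisms into \<open>T\<close> are exactly \<open>[s, id]\<close> for the solutions \<open>s\<close>
  of \<open>e\<close>.\<close>

definition coalg_on_sum where
  "coalg_on_sum X = copair C (inl (X \<oplus> T) Y \<cdot> inl X T) (cop_map C (inr X T) (cid C Y) \<cdot> c)"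

lemma src_coalg_on_sum [simp]: "src (coalg_on_sum X) = X \<oplus> T"
  and trg_coalg_on_sum [simp]: "trg (coalg_on_sum X) = (X \<oplus> T) \<oplus> Y"
  unfolding coalg_on_sum_def by simp_all

lemma coalg_on_sum_inr [simp]: "coalg_on_sum X \<cdot> inr X T = cop_map C (inr X T) (cid C Y) \<cdot> c"
  unfolding coalg_on_sum_def by simp

lemma cop_map_coalg_on_sum:
  assumes h: "h \<in> hom C (X \<oplus> T) T" "h \<cdot> inr X T = cid C T"
  shows "cop_map C h (cid C Y) \<cdot> coalg_on_sum X = c \<cdot> (copair C alg (cid C T) \<cdot> cop_map C (h \<cdot> inl X T) (cid C T))"
proof (rule cop_eqI[where A = X and B = T])
  have [simp]: "src h = X \<oplus> T" "trg h = T" using h by auto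
  show "(cop_map C h (cid C Y) \<cdot> coalg_on_sum X) \<cdot> inl X T =
    (c \<cdot> (copair C alg (cid C T) \<cdot> cop_map C (h \<cdot> inl X T) (cid C T))) \<cdot> inl X T"
    unfolding coalg_on_sum_def by simp
  show "(cop_map C h (cid C Y) \<cdot> coalg_on_sum X) \<cdot> inr X T =
    (c \<cdot> (copair C alg (cid C T) \<cdot> cop_map C (h \<cdot> inl X T) (cid C T))) \<cdot> inr X T"
    using h(2) by simp
qed (use h in simp_all)

lemma equation_coalgebra_morphism_iff:
  assumes e: "e \<in> hom C X (X \<oplus> T)" and h: "h \<in> hom C (X \<oplus> T) T"
  shows "c \<cdot> h = cop_map C h (cid C Y) \<cdot> (coalg_on_sum X \<cdot> copair C e (inr X T)) \<longleftrightarrow>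
    h \<cdot> inr X T = cid C T \<and> h \<cdot> inl X T = copair C alg (cid C T) \<cdot> (cop_map C (h \<cdot> inl X T) (cid C T) \<cdot> e)"
    (is "?morph \<longleftrightarrow> ?id \<and> ?sol")
proof -
  have [simp]: "src e = X" "trg e = X \<oplus> T" "src h = X \<oplus> T" "trg h = T" using e h by auto
  let ?s = "h \<cdot> inl X T"
  show ?thesis
  proof
    assume morph: ?morph
    have "c \<cdot> (h \<cdot> inr X T) = cop_map C (h \<cdot> inr X T) (cid C Y) \<cdot> c"
      using comp_reassoc[OF morph[symmetric], of "inr X T"] by simp
    then have id: ?id by (intro coalgebra_endomorphism_id) simp_all
    have "c \<cdot> ?s = (cop_map C h (cid C Y) \<cdot> coalg_on_sum X) \<cdot> e"
      using comp_reassoc[OF morph[symmetric], of "inl X T"] by simp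
    also have "\<dots> = c \<cdot> (copair C alg (cid C T) \<cdot> (cop_map C ?s (cid C T) \<cdot> e))"
      unfolding cop_map_coalg_on_sum[OF h id] by simp
    finally have "c_inv \<cdot> (c \<cdot> ?s) = c_inv \<cdot> (c \<cdot> (copair C alg (cid C T) \<cdot> (cop_map C ?s (cid C T) \<cdot> e)))"
      by simp
    then show "?id \<and> ?sol" using id by simp
  next
    assume "?id \<and> ?sol"
    then have id: ?id and sol: ?sol by blast+
    show ?morph
    proof (rule cop_eqI[where A = X and B = T])
      have "(c \<cdot> h) \<cdot> inl X T = c \<cdot> (copair C alg (cid C T) \<cdot> (cop_map C ?s (cid C T) \<cdot> e))"
        using sol by simp
      also have "\<dots> = (cop_map C h (cid C Y) \<cdot> coalg_on_sum X) \<cdot> e"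
        unfolding cop_map_coalg_on_sum[OF h id] by simp
      finally show "(c \<cdot> h) \<cdot> inl X T = (cop_map C h (cid C Y) \<cdot> (coalg_on_sum X \<cdot> copair C e (inr X T))) \<cdot> inl X T"
        by simp
      show "(c \<cdot> h) \<cdot> inr X T = (cop_map C h (cid C Y) \<cdot> (coalg_on_sum X \<cdot> copair C e (inr X T))) \<cdot> inr X T"
        using id by simp
    qed simp_all
  qed
qed

lemma is_cia: "is_cia_Id C T alg"
  unfolding is_cia_Id_def
proof (intro conjI allI impI)
  show "alg \<in> hom C T T" by simp
  fix X e assume e: "e \<in> hom C X (X \<oplus> T)"
  have "coalg_on_sum X \<cdot> copair C e (inr X T) \<in> hom C (X \<oplus> T) ((X \<oplus> T) \<oplus> Y)" using e by simp
  then obtain h where h: "h \<in> hom C (X \<oplus> T) T"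
    and morph: "c \<cdot> h = cop_map C h (cid C Y) \<cdot> (coalg_on_sum X \<cdot> copair C e (inr X T))"
    and uniq: "\<And>h'. h' \<in> hom C (X \<oplus> T) T \<Longrightarrow>
      c \<cdot> h' = cop_map C h' (cid C Y) \<cdot> (coalg_on_sum X \<cdot> copair C e (inr X T)) \<Longrightarrow> h' = h"
    using coalgebra_morphism_ex1 by metis
  show "\<exists>!s. s \<in> hom C X T \<and> s = copair C alg (cid C T) \<cdot> (cop_map C s (cid C T) \<cdot> e)"
  proof (rule ex1I[of _ "h \<cdot> inl X T"])
    show "h \<cdot> inl X T \<in> hom C X T \<and>
      h \<cdot> inl X T = copair C alg (cid C T) \<cdot> (cop_map C (h \<cdot> inl X T) (cid C T) \<cdot> e)"
      using morph equation_coalgebra_morphism_iff[OF e h] h by simp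
  next
    fix s assume s: "s \<in> hom C X T \<and> s = copair C alg (cid C T) \<cdot> (cop_map C s (cid C T) \<cdot> e)"
    have h': "copair C s (cid C T) \<in> hom C (X \<oplus> T) T" using s by simp
    have "copair C s (cid C T) = h"
      by (rule uniq[OF h'], subst equation_coalgebra_morphism_iff[OF e h']) (use s in simp)
    then show "s = h \<cdot> inl X T" using s by auto
  qed
qed

lemma cia_solution_iff_free_extension:
  assumes b: "b \<in> hom C B B" and g: "g \<in> hom C Y B" and k: "k \<in> hom C T B"
  shows "k = copair C b (cid C B) \<cdot> (cop_map C k (cid C B) \<cdot> (cop_map C (cid C T) g \<cdot> c)) \<longleftrightarrow>
    k \<cdot> alg = b \<cdot> k \<and> k \<cdot> eta = g"
proof -
  have [simp]: "src b = B" "trg b = B" "src g = Y" "trg g = B" "src k = T" "trg k = B" using b g k by auto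
  have "copair C b (cid C B) \<cdot> cop_map C k g = copair C (b \<cdot> k) g"
    by (rule cop_eqI[where A = T and B = Y]) simp_all
  then have "copair C b (cid C B) \<cdot> (cop_map C k (cid C B) \<cdot> (cop_map C (cid C T) g \<cdot> c)) =
      copair C (b \<cdot> k) g \<cdot> c"
    using comp_reassoc[of "copair C b (cid C B)" "cop_map C k g" _ c] by simp
  moreover have "k = copair C (b \<cdot> k) g \<cdot> c \<longleftrightarrow> k \<cdot> c_inv = copair C (b \<cdot> k) g"
  proof
    assume "k = copair C (b \<cdot> k) g \<cdot> c"
    then have "k \<cdot> c_inv = (copair C (b \<cdot> k) g \<cdot> c) \<cdot> c_inv" by (rule arg_cong)
    then show "k \<cdot> c_inv = copair C (b \<cdot> k) g" by (simp add: c_inv(2))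
  next
    assume eq: "k \<cdot> c_inv = copair C (b \<cdot> k) g"
    have "k = (k \<cdot> c_inv) \<cdot> c" by (simp add: c_inv(3))
    also have "\<dots> = copair C (b \<cdot> k) g \<cdot> c" by (simp only: eq)
    finally show "k = copair C (b \<cdot> k) g \<cdot> c" .
  qed
  moreover have "k \<cdot> c_inv = copair C (b \<cdot> k) g \<longleftrightarrow> k \<cdot> alg = b \<cdot> k \<and> k \<cdot> eta = g"
  proof -
    have "(k \<cdot> c_inv) \<cdot> inl T Y = k \<cdot> alg" "(k \<cdot> c_inv) \<cdot> inr T Y = k \<cdot> eta"
      unfolding alg_def eta_def by simp_all
    moreover have "copair C (b \<cdot> k) g \<cdot> inl T Y = b \<cdot> k" "copair C (b \<cdot> k) g \<cdot> inr T Y = g"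
      by simp_all
    moreover have "k \<cdot> c_inv \<in> hom C (T \<oplus> Y) B" "copair C (b \<cdot> k) g \<in> hom C (T \<oplus> Y) B" by simp_all
    ultimately show ?thesis using cop_eqI[of "k \<cdot> c_inv" T Y B "copair C (b \<cdot> k) g"] by metis
  qed
  ultimately show ?thesis by simp
qed

theorem free_cia: "is_free_cia_Id C Y T alg eta"
  unfolding is_free_cia_Id_def
proof (intro conjI allI impI is_cia)
  show "eta \<in> hom C Y T" by simp
  fix B b g assume "is_cia_Id C B b \<and> g \<in> hom C Y B"
  then have cia: "is_cia_Id C B b" and g: "g \<in> hom C Y B" by blast+
  have b: "b \<in> hom C B B" using cia unfolding is_cia_Id_def by blast
  have "cop_map C (cid C T) g \<cdot> c \<in> hom C T (T \<oplus> B)" using g by simp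
  then have "\<exists>!k. k \<in> hom C T B \<and>
      k = copair C b (cid C B) \<cdot> (cop_map C k (cid C B) \<cdot> (cop_map C (cid C T) g \<cdot> c))"
    using cia unfolding is_cia_Id_def by blast
  then show "\<exists>!k. k \<in> hom C T B \<and> k \<cdot> alg = b \<cdot> k \<and> k \<cdot> eta = g"
    using cia_solution_iff_free_extension[OF b g] by (metis (no_types, lifting))
qed

end

locale hyperextensive =
  fixes C :: "('o, 'm) cat"
  assumes hyper_extensive: "hyper_extensive C"

sublocale hyperextensive \<subseteq> countable_coproducts
  using hyper_extensive by unfold_locales (simp_all add: hyper_extensive_def)

context hyperextensive
begin

lemma coproduct_inj_pullback_ex:
  assumes "is_coproduct C I X S \<iota>" "n \<in> I" "h \<in> hom C Y S"
  shows "\<exists>P p q. is_pullback C (\<iota> n) h P p q"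
  using hyper_extensive assms unfolding hyper_extensive_def universal_coproducts_def by blast

lemma pullback_coproduct:
  assumes "is_coproduct C I X S \<iota>" "h \<in> hom C Y S"
    and "\<And>n. n \<in> I \<Longrightarrow> is_pullback C (\<iota> n) h (P n) (p n) (q n)"
  shows "is_coproduct C I P Y q"
proof -
  have "\<forall>P p q. (\<forall>n\<in>I. is_pullback C (\<iota> n) h (P n) (p n) (q n)) \<longrightarrow> is_coproduct C I P Y q"
    using hyper_extensive assms(1,2) unfolding hyper_extensive_def universal_coproducts_def by blast
  then show ?thesis using assms(3) by blast
qed

lemma coproduct_pullback_decomposition:
  assumes "is_coproduct C I X S \<iota>" "h \<in> hom C Y S"
  obtains P p q where "\<And>n. n \<in> I \<Longrightarrow> is_pullback C (\<iota> n) h (P n) (p n) (q n)"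
    and "is_coproduct C I P Y q"
proof -
  have "\<forall>n\<in>I. \<exists>t. case t of (P, p, q) \<Rightarrow> is_pullback C (\<iota> n) h P p q"
    using coproduct_inj_pullback_ex[OF assms(1) _ assms(2)] by auto
  then obtain t where t: "\<forall>n\<in>I. case t n of (P, p, q) \<Rightarrow> is_pullback C (\<iota> n) h P p q"
    by metis
  have pb: "\<And>n. n \<in> I \<Longrightarrow> is_pullback C (\<iota> n) h (fst (t n)) (fst (snd (t n))) (snd (snd (t n)))"
    using t by (auto split: prod.splits)
  show ?thesis using that[OF pb pullback_coproduct[OF assms pb]] .
qed

lemma initial_strict:
  assumes "f \<in> hom C A Z" "initial_obj C Z"
  shows "initial_obj C A"
proof -
  have "is_coproduct C {} (\<lambda>_. undefined) A (\<lambda>_. undefined)"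
    by (rule pullback_coproduct[OF initial_coproduct_empty[OF assms(2)] assms(1)]) auto
  then show ?thesis by (rule coproduct_empty_initial)
qed

lemma coproduct_inj_monic: "is_coproduct C I X S \<iota> \<Longrightarrow> n \<in> I \<Longrightarrow> monic C (\<iota> n)"
  using hyper_extensive unfolding hyper_extensive_def disjoint_coproducts_def by blast

lemma coproduct_injs_disjoint:
  "is_coproduct C I X S \<iota> \<Longrightarrow> n \<in> I \<Longrightarrow> m \<in> I \<Longrightarrow> n \<noteq> m \<Longrightarrow> disjoint_pair C (\<iota> n) (\<iota> m)"
  using hyper_extensive unfolding hyper_extensive_def disjoint_coproducts_def by blast

lemma disjoint_pair_cone_initial:
  assumes "disjoint_pair C f g" "a \<in> hom C Q (src f)" "b \<in> hom C Q (src g)" "f \<cdot> a = g \<cdot> b"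
  shows "initial_obj C Q"
proof -
  obtain P p q where pb: "is_pullback C f g P p q" and "initial_obj C P"
    using assms(1) unfolding disjoint_pair_def by blast
  moreover obtain u where "u \<in> hom C Q P" using pullback_lift[OF pb assms(2-4)] by blast
  ultimately show ?thesis using initial_strict by blast
qed

lemma coproduct_cone_initial:
  assumes "is_coproduct C I X S \<iota>" "n \<in> I" "m \<in> I" "n \<noteq> m"
    and "a \<in> hom C Q (X n)" "b \<in> hom C Q (X m)" "\<iota> n \<cdot> a = \<iota> m \<cdot> b"
  shows "initial_obj C Q"
  using disjoint_pair_cone_initial[OF coproduct_injs_disjoint[OF assms(1-4)]] assms(5-7)
    coproduct_inj[OF assms(1,2)] coproduct_inj[OF assms(1,3)] by auto

lemma bin_coproduct_cone_initial:
  assumes "is_bin_coproduct C A B S i j" "a \<in> hom C Q A" "b \<in> hom C Q B" "i \<cdot> a = j \<cdot> b"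
  shows "initial_obj C Q"
  using coproduct_cone_initial[OF bin_coproduct_as_coproduct[OF assms(1)], of 0 1 a Q b] assms by simp

lemma inl_monic: "monic C (inl A B)"
  using coproduct_inj_monic[OF bin_coproduct_as_coproduct[OF chosen_bin_coproduct], of 0] by simp

lemma coproduct_injection_pullback_ex:
  assumes "coproduct_injection C m" "f \<in> hom C W (trg m)"
  shows "\<exists>P p q. is_pullback C m f P p q"
proof -
  obtain A' m' where "is_bin_coproduct C (src m) A' (trg m) m m'" using assms(1) by (rule coproduct_injectionE)
  from coproduct_inj_pullback_ex[OF bin_coproduct_as_coproduct[OF this] _ assms(2), of 0]
  show ?thesis by auto
qed

lemma coproduct_injection_pullback:
  assumes "coproduct_injection C m" "is_pullback C m f P p q"
  shows "coproduct_injection C q"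
proof -
  obtain A' m' where b: "is_bin_coproduct C (src m) A' (trg m) m m'" using assms(1) by (rule coproduct_injectionE)
  have f: "f \<in> hom C (src f) (trg m)" using pullbackD(1)[OF assms(2)] by simp
  obtain W2 p2 q2 where pb2: "is_pullback C m' f W2 p2 q2"
    using coproduct_inj_pullback_ex[OF bin_coproduct_as_coproduct[OF b] _ f, of 1] by auto
  have "is_coproduct C {0, 1} (\<lambda>n. if n = 0 then P else W2) (src f) (\<lambda>n. if n = 0 then q else q2)"
    by (rule pullback_coproduct[OF bin_coproduct_as_coproduct[OF b] f, where p = "\<lambda>n. if n = 0 then p else p2"])
      (use assms(2) pb2 in auto)
  from coproduct_2_as_bin_coproduct[OF this] pullbackD(3)[OF assms(2)] show ?thesis
    unfolding coproduct_injection_def by auto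
qed

lemma coproduct_factor_through_inj:
  assumes c: "is_coproduct C I X S \<iota>" and k: "k \<in> I" and h: "h \<in> hom C A S"
    and others: "\<And>n P p q. n \<in> I \<Longrightarrow> n \<noteq> k \<Longrightarrow> is_pullback C (\<iota> n) h P p q \<Longrightarrow> initial_obj C P"
  obtains u where "u \<in> hom C A (X k)" "h = \<iota> k \<cdot> u"
proof -
  obtain Z p q where pb: "\<And>n. n \<in> I \<Longrightarrow> is_pullback C (\<iota> n) h (Z n) (p n) (q n)"
    and Zc: "is_coproduct C I Z A q"
    by (rule coproduct_pullback_decomposition[OF c h]) (rule that)
  obtain \<psi> where \<psi>: "\<psi> \<in> hom C A (Z k)" "q k \<cdot> \<psi> = cid C A"
    using coproduct_inj_iso_if_others_initial[OF Zc k] others pb by metis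
  have [simp]: "src (p k) = Z k" "trg (p k) = X k" "src (q k) = Z k" "trg (q k) = A"
    "src \<psi> = A" "trg \<psi> = Z k" "src h = A" "trg h = S" "src (\<iota> k) = X k" "trg (\<iota> k) = S"
    using pullbackD(2,3)[OF pb[OF k]] coproduct_inj[OF c k] \<psi>(1) h by auto
  have "h = (h \<cdot> q k) \<cdot> \<psi>" using \<psi>(2) by simp
  also have "\<dots> = \<iota> k \<cdot> (p k \<cdot> \<psi>)" by (simp flip: pullbackD(4)[OF pb[OF k]])
  finally show ?thesis using that[of "p k \<cdot> \<psi>"] by simp
qed

lemma disjoint_injections_complement:
  assumes m: "\<And>n. m n \<in> hom C (A n) B" "\<And>n. coproduct_injection C (m n)"
    and disjoint: "\<And>n k. n \<noteq> k \<Longrightarrow> disjoint_pair C (m n) (m k)"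
  obtains B' m' where "is_coproduct C UNIV (case_nat B' A) B (case_nat m' m)"
proof -
  obtain S \<sigma> where S: "is_coproduct C UNIV A S \<sigma>"
    using has_countable_coproducts unfolding has_countable_coproducts_def by blast
  obtain h where h: "h \<in> hom C S B" "\<forall>n\<in>UNIV. h \<cdot> \<sigma> n = m n"
    using coproduct_cotuple_ex[OF S m(1)] by blast
  have coherent: "\<forall>I A B m. (\<forall>n\<in>I. m n \<in> hom C (A n) B \<and> coproduct_injection C (m n)) \<and>
      (\<forall>n\<in>I. \<forall>k\<in>I. n \<noteq> k \<longrightarrow> disjoint_pair C (m n) (m k)) \<longrightarrow>
      (\<forall>S \<iota> h. is_coproduct C I A S \<iota> \<and> h \<in> hom C S B \<and> (\<forall>n\<in>I. h \<cdot> \<iota> n = m n) \<longrightarrow>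
        coproduct_injection C h)"
    using hyper_extensive unfolding hyper_extensive_def coherent_coproducts_def by blast
  have "(\<forall>n\<in>UNIV. m n \<in> hom C (A n) B \<and> coproduct_injection C (m n)) \<and>
      (\<forall>n\<in>UNIV. \<forall>k\<in>UNIV. n \<noteq> k \<longrightarrow> disjoint_pair C (m n) (m k))"
    using m disjoint by blast
  from coherent[rule_format, OF this, of S \<sigma> h] S h have "coproduct_injection C h" by blast
  then obtain B' m' where "is_bin_coproduct C S B' B h m'"
    by (rule coproduct_injectionE) (use h in simp)
  from coproduct_case_nat[OF this S] have "is_coproduct C UNIV (case_nat B' A) B (case_nat m' (\<lambda>n. h \<cdot> \<sigma> n))" .
  moreover have "case_nat m' (\<lambda>n. h \<cdot> \<sigma> n) = case_nat m' m" using h by (auto split: nat.split)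
  ultimately show ?thesis using that by simp
qed

end

section \<open>The coalgebra \<open>1 + Y + Y + \<dots>\<close>\<close>

locale hyperextensive_terminal = hyperextensive +
  fixes one
  assumes terminal: "terminal_obj C one"
begin

definition bang where "bang A = (THE f. f \<in> hom C A one)"

lemma bang_ex1: "\<exists>!f. f \<in> hom C A one"
  using terminal unfolding terminal_obj_def by blast

lemma bang_hom [simp]: "src (bang A) = A" "trg (bang A) = one"
  using theI'[OF bang_ex1] unfolding bang_def by simp_all

lemma bang_unique: "f \<in> hom C A one \<Longrightarrow> f = bang A"
  unfolding bang_def by (rule sym[OF the1_equality[OF bang_ex1]])

lemma product_point_pullback:
  assumes P: "is_product C N Y P \<pi>1 \<pi>2" and x: "x \<in> hom C one N"
    and j: "j \<in> hom C Y P" "\<pi>1 \<cdot> j = x \<cdot> bang Y" "\<pi>2 \<cdot> j = cid C Y"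
  shows "is_pullback C x \<pi>1 Y (bang Y) j"
proof -
  have [simp]: "src x = one" "trg x = N" "src j = Y" "trg j = P"
    "src \<pi>1 = P" "trg \<pi>1 = N" "src \<pi>2 = P" "trg \<pi>2 = Y"
    using P x j(1) unfolding is_product_def by auto
  show ?thesis
  proof (rule pullbackI)
    fix Q p q assume p: "p \<in> hom C Q (src x)" and q: "q \<in> hom C Q (src \<pi>1)" and pq: "x \<cdot> p = \<pi>1 \<cdot> q"
    have [simp]: "src p = Q" "trg p = one" "src q = Q" "trg q = P" using p q by auto
    have p_bang: "p = bang Q" using p by (intro bang_unique) simp
    have bang_\<pi>2q: "bang Y \<cdot> (\<pi>2 \<cdot> q) = bang Q" by (rule bang_unique) simp
    have "j \<cdot> (\<pi>2 \<cdot> q) \<in> hom C Q P \<and> \<pi>1 \<cdot> (j \<cdot> (\<pi>2 \<cdot> q)) = x \<cdot> bang Q \<and> \<pi>2 \<cdot> (j \<cdot> (\<pi>2 \<cdot> q)) = \<pi>2 \<cdot> q"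
      using comp_reassoc[OF j(2), of "\<pi>2 \<cdot> q"] comp_reassoc[OF j(3), of "\<pi>2 \<cdot> q"] bang_\<pi>2q by simp
    moreover have "q \<in> hom C Q P \<and> \<pi>1 \<cdot> q = x \<cdot> bang Q \<and> \<pi>2 \<cdot> q = \<pi>2 \<cdot> q"
      using pq p_bang by simp
    moreover have "\<exists>!h. h \<in> hom C Q P \<and> \<pi>1 \<cdot> h = x \<cdot> bang Q \<and> \<pi>2 \<cdot> h = \<pi>2 \<cdot> q"
      by (rule product_pair_ex1[OF P]) simp_all
    ultimately have "j \<cdot> (\<pi>2 \<cdot> q) = q" by (metis (no_types, lifting) the1_equality)
    with bang_\<pi>2q p_bang show "\<exists>u. u \<in> hom C Q Y \<and> bang Y \<cdot> u = p \<and> j \<cdot> u = q"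
      by (intro exI[of _ "\<pi>2 \<cdot> q"]) simp
  next
    fix Q u u' assume "u \<in> hom C Q Y" "u' \<in> hom C Q Y" "j \<cdot> u = j \<cdot> u'"
    then have "(\<pi>2 \<cdot> j) \<cdot> u = (\<pi>2 \<cdot> j) \<cdot> u'" by simp
    then show "u = u'" using j(3) \<open>u \<in> hom C Q Y\<close> \<open>u' \<in> hom C Q Y\<close> by simp
  qed (use j(2) in simp_all)
qed

text \<open>By universality, \<open>N \<times> Y\<close> is the copower \<open>\<coprod>\<^sub>n Y\<close>, with the injections
  \<open>\<langle>\<iota>\<^sub>n \<circ> !, id\<rangle>\<close> obtained by pulling back \<open>\<iota>\<^sub>n\<close> along the projection.\<close>

lemma product_copower_of_terminal:
  assumes N: "is_coproduct C UNIV (\<lambda>_. one) N \<iota>" and P: "is_product C N Y P \<pi>1 \<pi>2"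
  obtains j where "is_coproduct C UNIV (\<lambda>_. Y) P j"
proof -
  have \<iota>: "\<iota> n \<in> hom C one N" for n using coproduct_inj[OF N] by simp
  have \<pi>: "\<pi>1 \<in> hom C P N" "\<pi>2 \<in> hom C P Y" using P unfolding is_product_def by auto
  define j where "j n = (THE h. h \<in> hom C Y P \<and> \<pi>1 \<cdot> h = \<iota> n \<cdot> bang Y \<and> \<pi>2 \<cdot> h = cid C Y)" for n
  have "\<exists>!h. h \<in> hom C Y P \<and> \<pi>1 \<cdot> h = \<iota> n \<cdot> bang Y \<and> \<pi>2 \<cdot> h = cid C Y" for n
    by (rule product_pair_ex1[OF P]) (use \<iota> in simp_all)
  then have "j n \<in> hom C Y P \<and> \<pi>1 \<cdot> j n = \<iota> n \<cdot> bang Y \<and> \<pi>2 \<cdot> j n = cid C Y" for n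
    unfolding j_def by (rule theI')
  then have "is_pullback C (\<iota> n) \<pi>1 Y (bang Y) (j n)" for n
    using product_point_pullback[OF P \<iota>] by blast
  then have "is_coproduct C UNIV (\<lambda>_. Y) P j" by (intro pullback_coproduct[OF N \<pi>(1)])
  then show ?thesis by (rule that)
qed
end

text \<open>\<open>T = 1 + Y + Y + \<dots>\<close> models the behaviours of \<open>(-) + Y\<close>-coalgebras: the summand
  \<open>\<kappa> 0\<close> is the divergent behaviour, the summand \<open>\<kappa> (n + 1)\<close> outputs after \<open>n\<close> steps.\<close>

locale shift_coalgebra = hyperextensive_terminal +
  fixes Y T \<kappa>
  assumes T: "is_coproduct C UNIV (case_nat one (\<lambda>_. Y)) T \<kappa>"
begin

lemma src_\<kappa> [simp]: "src (\<kappa> 0) = one" "src (\<kappa> (Suc n)) = Y" and trg_\<kappa> [simp]: "trg (\<kappa> n) = T"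
  using coproduct_inj[OF T, of 0] coproduct_inj[OF T, of "Suc n"] coproduct_inj[OF T, of n] by auto

definition shift where
  "shift = cotuple \<kappa> T (T \<oplus> Y)
     (\<lambda>n. case n of 0 \<Rightarrow> inl T Y \<cdot> \<kappa> 0 | Suc 0 \<Rightarrow> inr T Y | Suc (Suc m) \<Rightarrow> inl T Y \<cdot> \<kappa> (Suc m))"

lemma src_shift [simp]: "src shift = T" and trg_shift [simp]: "trg shift = T \<oplus> Y"
  and shift_\<kappa>0: "shift \<cdot> \<kappa> 0 = inl T Y \<cdot> \<kappa> 0"
  and shift_\<kappa>1: "shift \<cdot> \<kappa> (Suc 0) = inr T Y"
  and shift_\<kappa>SS: "shift \<cdot> \<kappa> (Suc (Suc m)) = inl T Y \<cdot> \<kappa> (Suc m)"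
  using cotuple[OF T, of _ "T \<oplus> Y"] unfolding shift_def by (auto split: nat.split)

definition shift_inv where
  "shift_inv = copair C (cotuple \<kappa> T T (case_nat (\<kappa> 0) (\<lambda>m. \<kappa> (Suc (Suc m))))) (\<kappa> (Suc 0))"

lemma shift_inv_hom [simp]: "src shift_inv = T \<oplus> Y" "trg shift_inv = T"
  and shift_inv_shift: "shift_inv \<cdot> shift = cid C T"
proof -
  define delay where "delay = cotuple \<kappa> T T (case_nat (\<kappa> 0) (\<lambda>m. \<kappa> (Suc (Suc m))))"
  have "delay \<in> hom C T T" "delay \<cdot> \<kappa> 0 = \<kappa> 0" "delay \<cdot> \<kappa> (Suc m) = \<kappa> (Suc (Suc m))" for m
    using cotuple[OF T, of _ T] unfolding delay_def by (auto split: nat.split)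
  then have [simp]: "src delay = T" "trg delay = T"
    and delay_\<kappa>: "delay \<cdot> \<kappa> 0 = \<kappa> 0" "delay \<cdot> \<kappa> (Suc m) = \<kappa> (Suc (Suc m))" for m
    by auto
  have inv: "shift_inv = copair C delay (\<kappa> (Suc 0))" unfolding shift_inv_def delay_def ..
  show "src shift_inv = T \<oplus> Y" "trg shift_inv = T" unfolding inv by simp_all
  show "shift_inv \<cdot> shift = cid C T"
  proof (rule coproduct_eqI[OF T])
    fix n
    have "shift_inv \<cdot> (shift \<cdot> \<kappa> n) = \<kappa> n"
    proof (cases n)
      case 0 then show ?thesis by (simp add: inv shift_\<kappa>0 delay_\<kappa>)
    next
      case (Suc m) then show ?thesis by (cases m) (simp_all add: inv shift_\<kappa>1 shift_\<kappa>SS delay_\<kappa>)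
    qed
    then show "(shift_inv \<cdot> shift) \<cdot> \<kappa> n = cid C T \<cdot> \<kappa> n" by (simp add: inv)
  qed (simp_all add: inv)
qed

lemma shift_inv_shift_comp [simp]: "trg z = T \<Longrightarrow> shift_inv \<cdot> (shift \<cdot> z) = z"
  using comp_reassoc[OF shift_inv_shift, of z] by simp

lemma shift_cancel:
  assumes "trg z = T" "trg z' = T" "shift \<cdot> z = shift \<cdot> z'"
  shows "z = z'"
proof -
  have "shift_inv \<cdot> (shift \<cdot> z) = shift_inv \<cdot> (shift \<cdot> z')" using assms(3) by (rule arg_cong)
  then show ?thesis using assms(1,2) by simp
qed

lemma shift_loop_divergent:
  assumes z: "z \<in> hom C A T" and v: "v \<in> hom C A A" and loop: "shift \<cdot> z = inl T Y \<cdot> (z \<cdot> v)"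
  shows "z = \<kappa> 0 \<cdot> bang A"
proof -
  have [simp]: "src z = A" "trg z = T" "src v = A" "trg v = A" using z v by auto
  have shift_z: "shift \<cdot> (z \<cdot> w) = inl T Y \<cdot> (z \<cdot> (v \<cdot> w))" if "trg w = A" for w
    using comp_reassoc[OF loop, of w] that by simp
  have init: "initial_obj C P" if "is_pullback C (\<kappa> (Suc m)) z P p q" for m P p q
    using that
  proof (induction m arbitrary: P p q)
    case 0
    note pb = pullbackD[OF "0.prems"]
    have [simp]: "src p = P" "trg p = Y" "src q = P" "trg q = A" using pb(2,3) by auto
    have "inr T Y \<cdot> p = shift \<cdot> (\<kappa> (Suc 0) \<cdot> p)" using comp_reassoc[OF shift_\<kappa>1] by simp
    also have "\<dots> = inl T Y \<cdot> (z \<cdot> (v \<cdot> q))" by (simp only: pb(4) shift_z \<open>trg q = A\<close>)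
    finally show ?case
      by (intro bin_coproduct_cone_initial[OF bin_coproduct_swap[OF chosen_bin_coproduct]]) simp_all
  next
    case (Suc m)
    note pb = pullbackD[OF Suc.prems]
    have [simp]: "src p = P" "trg p = Y" "src q = P" "trg q = A" using pb(2,3) by auto
    have "inl T Y \<cdot> (\<kappa> (Suc m) \<cdot> p) = shift \<cdot> (\<kappa> (Suc (Suc m)) \<cdot> p)"
      using comp_reassoc[OF shift_\<kappa>SS[of m]] by simp
    also have "\<dots> = inl T Y \<cdot> (z \<cdot> (v \<cdot> q))" by (simp only: pb(4) shift_z \<open>trg q = A\<close>)
    finally have "\<kappa> (Suc m) \<cdot> p = z \<cdot> (v \<cdot> q)" by (rule monicD[OF inl_monic]) simp_all
    moreover obtain P' p' q' where pb': "is_pullback C (\<kappa> (Suc m)) z P' p' q'"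
      using coproduct_inj_pullback_ex[OF T UNIV_I z] by blast
    ultimately obtain u where "u \<in> hom C P P'"
      using pullback_lift[OF pb', of p P "v \<cdot> q"] by auto
    then show ?case using initial_strict Suc.IH[OF pb'] by blast
  qed
  obtain u where "u \<in> hom C A one" "z = \<kappa> 0 \<cdot> u"
  proof (rule coproduct_factor_through_inj[OF T UNIV_I[of 0] z])
    fix n P p q assume "n \<noteq> 0" "is_pullback C (\<kappa> n) z P p q"
    then show "initial_obj C P" using init by (cases n) auto
  qed (use that in simp)
  moreover from this(1) have "u = bang A" by (rule bang_unique)
  ultimately show ?thesis by simp
qed

end

section \<open>Terminality of the coalgebra \<open>1 + Y + Y + \<dots>\<close>\<close>

text \<open>Given a coalgebra \<open>e : X \<rightarrow> X + Y\<close>, the stage \<open>X\<^sub>n\<close> consists of the states which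
  produce output after exactly \<open>n\<close> steps: \<open>X\<^sub>0\<close> is the pullback of \<open>inr\<close> along \<open>e\<close>, and
  \<open>X\<^sub>n\<^sub>+\<^sub>1\<close> that of \<open>inl \<circ> x\<^sub>n\<close>. By coherence the stages, together with a remaining
  summand \<open>X\<^sub>\<infinity>\<close> of diverging states, decompose \<open>X\<close>.\<close>

locale shift_coalgebra_unfold = shift_coalgebra +
  fixes X e
  assumes e: "e \<in> hom C X (X \<oplus> Y)"
begin

lemma src_e [simp]: "src e = X" and trg_e [simp]: "trg e = X \<oplus> Y"
  using e by auto

primrec stage_target where
  "stage_target 0 = inr X Y"
| "stage_target (Suc n) = inl X Y \<cdot> snd (snd (pullback_of (stage_target n) e))"

definition "stage n = fst (pullback_of (stage_target n) e)"
definition "stage_step n = fst (snd (pullback_of (stage_target n) e))"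
definition "stage_inj n = snd (snd (pullback_of (stage_target n) e))"

lemma stage_pullback:
  "is_pullback C (stage_target n) e (stage n) (stage_step n) (stage_inj n) \<and>
    coproduct_injection C (stage_target n) \<and> trg (stage_target n) = X \<oplus> Y"
proof (induction n)
  case 0
  have ci: "coproduct_injection C (inr X Y)"
    by (rule bin_coproduct_coproduct_injection(2)[OF chosen_bin_coproduct])
  obtain P p q where "is_pullback C (inr X Y) e P p q"
    using coproduct_injection_pullback_ex[OF ci, of e] by auto
  from pullback_of[OF this] ci show ?case
    unfolding stage_def stage_step_def stage_inj_def by simp
next
  case (Suc n)
  then have pb: "is_pullback C (stage_target n) e (stage n) (stage_step n) (stage_inj n)"
    and "coproduct_injection C (stage_inj n)"
    using coproduct_injection_pullback by blast+
  moreover have trg: "trg (stage_inj n) = X" using pullbackD(3)[OF pb] by simp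
  ultimately have ci: "coproduct_injection C (inl X Y \<cdot> stage_inj n)"
    using coproduct_injection_comp[of "stage_inj n" "inl X Y"]
      bin_coproduct_coproduct_injection(1)[OF chosen_bin_coproduct] by simp
  obtain P p q where "is_pullback C (inl X Y \<cdot> stage_inj n) e P p q"
    using coproduct_injection_pullback_ex[OF ci, of e] trg by auto
  from pullback_of[OF this] ci trg show ?case
    unfolding stage_def stage_step_def stage_inj_def by simp
qed

lemma stage_pullback_0: "is_pullback C (inr X Y) e (stage 0) (stage_step 0) (stage_inj 0)"
  and stage_pullback_Suc: "is_pullback C (inl X Y \<cdot> stage_inj n) e (stage (Suc n)) (stage_step (Suc n)) (stage_inj (Suc n))"
  and stage_inj_coproduct_injection: "coproduct_injection C (stage_inj n)"
  using stage_pullback[of 0] stage_pullback[of "Suc n"] stage_pullback[of n]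
    coproduct_injection_pullback by (simp_all add: stage_inj_def) blast

lemma stage_inj_hom [simp]: "src (stage_inj n) = stage n" "trg (stage_inj n) = X"
  using pullbackD(3)[OF stage_pullback_0] pullbackD(3)[OF stage_pullback_Suc] by (cases n; simp)+

lemma stage_step_hom [simp]: "src (stage_step n) = stage n"
  "trg (stage_step 0) = Y" "trg (stage_step (Suc n)) = stage n"
  using pullbackD(2)[OF stage_pullback_0] pullbackD(2)[OF stage_pullback_Suc, of n]
    pullbackD(2)[OF stage_pullback_Suc, of "n - 1"] by (cases n; simp)+

lemma e_stage_inj_0: "e \<cdot> stage_inj 0 = inr X Y \<cdot> stage_step 0"
  and e_stage_inj_Suc: "e \<cdot> stage_inj (Suc n) = inl X Y \<cdot> (stage_inj n \<cdot> stage_step (Suc n))"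
  using pullbackD(4)[OF stage_pullback_0] pullbackD(4)[OF stage_pullback_Suc, of n] by simp_all

lemma stage_cone_initial:
  "n \<noteq> m \<Longrightarrow> a \<in> hom C Q (stage n) \<Longrightarrow> b \<in> hom C Q (stage m) \<Longrightarrow>
    stage_inj n \<cdot> a = stage_inj m \<cdot> b \<Longrightarrow> initial_obj C Q"
proof (induction n arbitrary: m Q a b)
  have inr_inl: "initial_obj C Q"
    if "a \<in> hom C Q (stage 0)" "b \<in> hom C Q (stage (Suc k))" "stage_inj 0 \<cdot> a = stage_inj (Suc k) \<cdot> b"
    for Q a b k
  proof -
    have [simp]: "src a = Q" "trg a = stage 0" "src b = Q" "trg b = stage (Suc k)" using that by auto
    have "inr X Y \<cdot> (stage_step 0 \<cdot> a) = e \<cdot> (stage_inj 0 \<cdot> a)"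
      using comp_reassoc[OF e_stage_inj_0[symmetric], of a] by simp
    also have "\<dots> = inl X Y \<cdot> (stage_inj k \<cdot> (stage_step (Suc k) \<cdot> b))"
      using that(3) comp_reassoc[OF e_stage_inj_Suc[of k], of b] by simp
    finally show ?thesis
      by (intro bin_coproduct_cone_initial[OF bin_coproduct_swap[OF chosen_bin_coproduct]]) simp_all
  qed
  {
    case 0
    then obtain k where "m = Suc k" by (cases m) auto
    with 0 inr_inl show ?case by blast
  next
    case (Suc n)
    show ?case
    proof (cases m)
      case 0
      with Suc.prems inr_inl show ?thesis by metis
    next
      case (Suc k)
      have [simp]: "src a = Q" "trg a = stage (Suc n)" "src b = Q" "trg b = stage (Suc k)"
        using Suc Suc.prems by auto
      have "inl X Y \<cdot> (stage_inj n \<cdot> (stage_step (Suc n) \<cdot> a)) = e \<cdot> (stage_inj (Suc n) \<cdot> a)"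
        using comp_reassoc[OF e_stage_inj_Suc[of n, symmetric], of a] by simp
      also have "\<dots> = inl X Y \<cdot> (stage_inj k \<cdot> (stage_step (Suc k) \<cdot> b))"
        using Suc Suc.prems comp_reassoc[OF e_stage_inj_Suc[of k], of b] by simp
      finally have "stage_inj n \<cdot> (stage_step (Suc n) \<cdot> a) = stage_inj k \<cdot> (stage_step (Suc k) \<cdot> b)"
        by (rule monicD[OF inl_monic]) simp_all
      then show ?thesis
        using Suc.IH[of k "stage_step (Suc n) \<cdot> a" Q "stage_step (Suc k) \<cdot> b"] Suc Suc.prems by simp
    qed
  }
qed

lemma stage_injs_disjoint: "n \<noteq> m \<Longrightarrow> disjoint_pair C (stage_inj n) (stage_inj m)"
proof -
  assume nm: "n \<noteq> m"
  obtain P p q where pb: "is_pullback C (stage_inj n) (stage_inj m) P p q"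
    using coproduct_injection_pullback_ex[OF stage_inj_coproduct_injection[of n], of "stage_inj m"] by auto
  have "initial_obj C P" using stage_cone_initial[OF nm, of p P q] pullbackD[OF pb] by simp
  with pb show ?thesis unfolding disjoint_pair_def by blast
qed

definition "loop_decomposition = (SOME (L, l). is_coproduct C UNIV (case_nat L stage) X (case_nat l stage_inj))"
definition "loop = fst loop_decomposition"
definition "loop_inj = snd loop_decomposition"

lemma X_decomposition: "is_coproduct C UNIV (case_nat loop stage) X (case_nat loop_inj stage_inj)"
proof -
  obtain L l where "is_coproduct C UNIV (case_nat L stage) X (case_nat l stage_inj)"
    by (rule disjoint_injections_complement[of stage_inj stage X])
      (use stage_inj_coproduct_injection stage_injs_disjoint in simp_all)
  then have "case loop_decomposition of (L, l) \<Rightarrow> is_coproduct C UNIV (case_nat L stage) X (case_nat l stage_inj)"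
    unfolding loop_decomposition_def by (intro someI_ex[of "\<lambda>(L, l). _ L l"]) auto
  then show ?thesis unfolding loop_def loop_inj_def by (simp split: prod.splits)
qed

lemma loop_inj_hom [simp]: "src loop_inj = loop" "trg loop_inj = X"
  using coproduct_inj[OF X_decomposition, of 0] by auto

lemma loop_cone_initial:
  "a \<in> hom C Q loop \<Longrightarrow> b \<in> hom C Q (stage m) \<Longrightarrow> loop_inj \<cdot> a = stage_inj m \<cdot> b \<Longrightarrow> initial_obj C Q"
  using coproduct_cone_initial[OF X_decomposition, of 0 "Suc m" a Q b] by simp

lemma loop_steps_left:
  obtains g where "g \<in> hom C loop X" "e \<cdot> loop_inj = inl X Y \<cdot> g"
proof (rule coproduct_factor_through_inj[OF bin_coproduct_as_coproduct[OF chosen_bin_coproduct], of 0 "e \<cdot> loop_inj"])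
  fix n P p q assume "n \<in> {0, 1}" "n \<noteq> 0" and pb: "is_pullback C (if n = 0 then inl X Y else inr X Y) (e \<cdot> loop_inj) P p q"
  then have pb: "is_pullback C (inr X Y) (e \<cdot> loop_inj) P p q" by simp
  obtain u where "u \<in> hom C P (stage 0)" "stage_inj 0 \<cdot> u = loop_inj \<cdot> q"
    using pullback_lift[OF stage_pullback_0, of p P "loop_inj \<cdot> q"] pullbackD[OF pb] by auto
  then show "initial_obj C P" using loop_cone_initial[of q P u 0] pullbackD(3)[OF pb] by simp
qed (auto intro: that)

lemma loop_stays:
  obtains v where "v \<in> hom C loop loop" "e \<cdot> loop_inj = inl X Y \<cdot> (loop_inj \<cdot> v)"
proof -
  obtain g where g: "g \<in> hom C loop X" "e \<cdot> loop_inj = inl X Y \<cdot> g" by (rule loop_steps_left)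
  have [simp]: "src g = loop" "trg g = X" using g by auto
  obtain v where "v \<in> hom C loop loop" "g = loop_inj \<cdot> v"
  proof (rule coproduct_factor_through_inj[OF X_decomposition, of 0 g])
    fix n P p q assume "n \<noteq> 0" and pb: "is_pullback C (case_nat loop_inj stage_inj n) g P p q"
    then obtain m where n: "n = Suc m" by (cases n) auto
    have [simp]: "src p = P" "trg p = stage m" "src q = P" "trg q = loop"
      using pullbackD(2,3)[OF pb] n by auto
    have "inl X Y \<cdot> (stage_inj m \<cdot> p) = e \<cdot> (loop_inj \<cdot> q)"
      using pullbackD(4)[OF pb] n comp_reassoc[OF g(2)[symmetric], of q] by simp
    then obtain u where "u \<in> hom C P (stage (Suc m))" "stage_inj (Suc m) \<cdot> u = loop_inj \<cdot> q"
      using pullback_lift[OF stage_pullback_Suc[of m], of p P "loop_inj \<cdot> q"] by auto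
    then show "initial_obj C P" using loop_cone_initial[of q P u "Suc m"] by simp
  qed (auto intro: that)
  with g that show ?thesis by simp
qed

primrec stage_out where
  "stage_out 0 = stage_step 0"
| "stage_out (Suc n) = stage_out n \<cdot> stage_step (Suc n)"

lemma stage_out_hom [simp]: "src (stage_out n) = stage n" "trg (stage_out n) = Y"
  by (induction n) simp_all

definition unfold where
  "unfold = cotuple (case_nat loop_inj stage_inj) X T
     (case_nat (\<kappa> 0 \<cdot> bang loop) (\<lambda>m. \<kappa> (Suc m) \<cdot> stage_out m))"

lemma unfold_hom [simp]: "src unfold = X" "trg unfold = T"
  and unfold_loop_inj: "unfold \<cdot> loop_inj = \<kappa> 0 \<cdot> bang loop"
  and unfold_stage_inj: "unfold \<cdot> stage_inj m = \<kappa> (Suc m) \<cdot> stage_out m"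
proof -
  have "case_nat (\<kappa> 0 \<cdot> bang loop) (\<lambda>m. \<kappa> (Suc m) \<cdot> stage_out m) n \<in> hom C (case_nat loop stage n) T" for n
    by (simp split: nat.split)
  note cotuple[OF X_decomposition this, folded unfold_def]
  from this(1) this(2)[of 0] this(2)[of "Suc m"]
  show "src unfold = X" "trg unfold = T" "unfold \<cdot> loop_inj = \<kappa> 0 \<cdot> bang loop"
    "unfold \<cdot> stage_inj m = \<kappa> (Suc m) \<cdot> stage_out m" by simp_all
qed

lemma unfold_coalgebra_morphism: "shift \<cdot> unfold = cop_map C unfold (cid C Y) \<cdot> e"
proof (rule coproduct_eqI[OF X_decomposition])
  fix n
  show "(shift \<cdot> unfold) \<cdot> case_nat loop_inj stage_inj n = (cop_map C unfold (cid C Y) \<cdot> e) \<cdot> case_nat loop_inj stage_inj n"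
  proof (cases n)
    case 0
    obtain v where v: "v \<in> hom C loop loop" "e \<cdot> loop_inj = inl X Y \<cdot> (loop_inj \<cdot> v)" by (rule loop_stays)
    have [simp]: "src v = loop" "trg v = loop" using v by auto
    have "(shift \<cdot> unfold) \<cdot> loop_inj = inl T Y \<cdot> (\<kappa> 0 \<cdot> bang loop)"
      using comp_reassoc[OF shift_\<kappa>0, of "bang loop"] by (simp add: unfold_loop_inj)
    moreover have "(cop_map C unfold (cid C Y) \<cdot> e) \<cdot> loop_inj = inl T Y \<cdot> (\<kappa> 0 \<cdot> (bang loop \<cdot> v))"
      using v(2) comp_reassoc[OF unfold_loop_inj, of v] by simp
    moreover have "bang loop \<cdot> v = bang loop" using bang_unique[of "bang loop \<cdot> v" loop] by simp
    ultimately show ?thesis using 0 by simp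
  next
    case (Suc m)
    show ?thesis
    proof (cases m)
      case 0
      have "(shift \<cdot> unfold) \<cdot> stage_inj 0 = inr T Y \<cdot> stage_step 0"
        using comp_reassoc[OF shift_\<kappa>1, of "stage_out 0"] by (simp add: unfold_stage_inj)
      moreover have "(cop_map C unfold (cid C Y) \<cdot> e) \<cdot> stage_inj 0 = inr T Y \<cdot> stage_step 0"
        by (simp add: e_stage_inj_0)
      ultimately show ?thesis using Suc 0 by simp
    next
      case (Suc k)
      have "(shift \<cdot> unfold) \<cdot> stage_inj (Suc k) = inl T Y \<cdot> (\<kappa> (Suc k) \<cdot> (stage_out k \<cdot> stage_step (Suc k)))"
        using comp_reassoc[OF shift_\<kappa>SS[of k], of "stage_out (Suc k)"] by (simp add: unfold_stage_inj)
      moreover have "(cop_map C unfold (cid C Y) \<cdot> e) \<cdot> stage_inj (Suc k) =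
          inl T Y \<cdot> (\<kappa> (Suc k) \<cdot> (stage_out k \<cdot> stage_step (Suc k)))"
        using comp_reassoc[OF unfold_stage_inj[of k], of "stage_step (Suc k)"] by (simp add: e_stage_inj_Suc)
      ultimately show ?thesis using \<open>n = Suc m\<close> Suc by simp
    qed
  qed
qed (simp_all split: nat.split)

context
  fixes h
  assumes h: "h \<in> hom C X T" and morph: "shift \<cdot> h = cop_map C h (cid C Y) \<cdot> e"
begin

lemma coalgebra_morphism_hom [simp]: "src h = X" "trg h = T"
  using h by auto

lemma shift_comp_coalgebra_morphism: "trg z = X \<Longrightarrow> shift \<cdot> (h \<cdot> z) = cop_map C h (cid C Y) \<cdot> (e \<cdot> z)"
  using comp_reassoc[OF morph, of z] by simp

lemma coalgebra_morphism_on_stage: "h \<cdot> stage_inj m = \<kappa> (Suc m) \<cdot> stage_out m"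
proof (induction m)
  case 0
  show ?case
  proof (rule shift_cancel)
    show "shift \<cdot> (h \<cdot> stage_inj 0) = shift \<cdot> (\<kappa> (Suc 0) \<cdot> stage_out 0)"
      using comp_reassoc[OF shift_\<kappa>1, of "stage_out 0"] by (simp add: shift_comp_coalgebra_morphism e_stage_inj_0)
  qed simp_all
next
  case (Suc m)
  show ?case
  proof (rule shift_cancel)
    have "shift \<cdot> (h \<cdot> stage_inj (Suc m)) = inl T Y \<cdot> ((h \<cdot> stage_inj m) \<cdot> stage_step (Suc m))"
      by (simp add: shift_comp_coalgebra_morphism e_stage_inj_Suc)
    also have "\<dots> = shift \<cdot> (\<kappa> (Suc (Suc m)) \<cdot> stage_out (Suc m))"
      using comp_reassoc[OF shift_\<kappa>SS[of m], of "stage_out (Suc m)"] by (simp add: Suc.IH)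
    finally show "shift \<cdot> (h \<cdot> stage_inj (Suc m)) = shift \<cdot> (\<kappa> (Suc (Suc m)) \<cdot> stage_out (Suc m))" .
  qed simp_all
qed

lemma coalgebra_morphism_on_loop: "h \<cdot> loop_inj = \<kappa> 0 \<cdot> bang loop"
proof -
  obtain v where v: "v \<in> hom C loop loop" "e \<cdot> loop_inj = inl X Y \<cdot> (loop_inj \<cdot> v)" by (rule loop_stays)
  have "shift \<cdot> (h \<cdot> loop_inj) = inl T Y \<cdot> ((h \<cdot> loop_inj) \<cdot> v)"
    using v by (simp add: shift_comp_coalgebra_morphism)
  then show ?thesis by (intro shift_loop_divergent[OF _ v(1)]) simp_all
qed

lemma coalgebra_morphism_eq_unfold: "h = unfold"
proof (rule coproduct_eqI[OF X_decomposition])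
  fix n show "h \<cdot> case_nat loop_inj stage_inj n = unfold \<cdot> case_nat loop_inj stage_inj n"
    by (cases n) (simp_all add: coalgebra_morphism_on_loop coalgebra_morphism_on_stage
      unfold_loop_inj unfold_stage_inj)
qed simp_all

end

end

theorem (in shift_coalgebra) shift_terminal: "terminal_coalg_plus C Y T shift"
  unfolding terminal_coalg_plus_def
proof (intro conjI allI impI)
  show "shift \<in> hom C T (T \<oplus> Y)" by simp
  fix X e assume "e \<in> hom C X (X \<oplus> Y)"
  then interpret shift_coalgebra_unfold C one Y T \<kappa> X e by unfold_locales
  show "\<exists>!h. h \<in> hom C X T \<and> shift \<cdot> h = cop_map C h (cid C Y) \<cdot> e"
  proof (rule ex1I[of _ unfold])
    show "unfold \<in> hom C X T \<and> shift \<cdot> unfold = cop_map C unfold (cid C Y) \<cdot> e"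
      using unfold_coalgebra_morphism by simp
  qed (use coalgebra_morphism_eq_unfold in blast)
qed

theorem mainTheorem12:
  fixes C :: "('o, 'm) cat"
  assumes "hyper_extensive C"
    and "has_binary_products C"
    and "terminal_obj C one"
    and "is_coproduct C UNIV (\<lambda>_. one) N \<iota>"
    and "s \<in> hom C N N"
    and "\<forall>n. ccomp C s (\<iota> n) = \<iota> (Suc n)"
  shows "initial_alg_one_plus C one N (copair C (\<iota> 0) s) \<and>
         (\<forall>Y P \<pi>1 \<pi>2 T k1 k2. is_product C N Y P \<pi>1 \<pi>2 \<and> is_bin_coproduct C P one T k1 k2 \<longrightarrow>
            (\<exists>a \<eta>. is_free_cia_Id C Y T a \<eta>) \<and> (\<exists>c. terminal_coalg_plus C Y T c))"
proof -
  interpret hyperextensive_terminal C one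
    by unfold_locales (fact assms(1), fact assms(3))
  have "(\<exists>a \<eta>. is_free_cia_Id C Y T a \<eta>) \<and> (\<exists>c. terminal_coalg_plus C Y T c)"
    if P: "is_product C N Y P \<pi>1 \<pi>2" and T: "is_bin_coproduct C P one T k1 k2" for Y P \<pi>1 \<pi>2 T k1 k2
  proof -
    obtain j where "is_coproduct C UNIV (\<lambda>_. Y) P j"
      by (rule product_copower_of_terminal[OF assms(4) P])
    from coproduct_case_nat[OF T this]
    interpret shift_coalgebra C one Y T "case_nat k2 (\<lambda>m. k1 \<cdot> j m)"
      by unfold_locales
    interpret terminal_plus_coalgebra C Y T shift
      by unfold_locales (rule shift_terminal)
    show ?thesis using free_cia shift_terminal by blast
  qed
  with natural_numbers_object[OF assms(4-6)] show ?thesis by blast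
qed

end
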